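(* Let $s>0$, $Y>0$, $\tau\geq 0$, and consider the delay differential system \[ \dot x(t)=x(t)(1-x(t))-y(t)x(t),\qquad \dot y(t)=-sy(t)+Ye^{-s\tau}y(t-\tau)x(t-\tau), \] with initial data $(\phi,\psi)\in X:=C([-\tau,0],\mathbb{R}_+)^2$. Its equilibria are $E_0=(0,0)$, $E_1=(1,0)$ and $E_+=(x_+(\tau),y_+(\tau))=\left(\frac{s}{Y}e^{s\tau},\,1-\frac{s}{Y}e^{s\tau}\right)$. Let $\tau_c=\frac1s\ln\left(\frac{Y}{s}\right)$ and \[ X^0=\{(\phi,\psi)\in X:\ \phi(0)>0 \text{ and there exists } \theta\in[-\tau,0] \text{ with } \phi(\theta)\psi(\theta)>0\}. \] Then: \begin{enumerate} \item $E_0$ is always unstable. \item (a) $E_1$ is unstable if $0\leq\tau<\tau_c$; (b) $E_1$ is globally asymptotically stable with respect to initial data in $X^0$ if $\tau>\tau_c$ (i.e. if $\frac{se^{s\tau}}{Y}>1$). \item Both components of $E_+$ are positive if and only if $0\leq\tau<\tau_c$ (i.e. $\frac{se^{s\tau}}{Y}<1$). Moreover: (a) when both components of $E_+$ are positive and $\tau=0$, $E_+$ is globally asymptotically stable with respect to initial data in $\operatorname{int}\mathbb{R}^2_+$; (b) when both components of $E_+$ are positive (and $\tau\geq0$), the system is uniformly persistent with respect to initial data in $X^0$: there exists $\epsilon>0$, independent of $(\phi,\psi)\in X^0$, such that $\liminf_{t\to\infty}x(t)>\epsilon$ and $\liminf_{t\to\infty}y(t)>\epsilon$. \end{enumerat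e}
   Context: $\mathbb{R}_+=\{x\in\mathbb{R}:x\geq0\}$; $C([-\tau,0],\mathbb{R}_+)$ carries the uniform norm. Local stability of an equilibrium is in the sense of the linearized delay system, i.e. determined by the roots of its characteristic equation; global asymptotic stability with respect to a set of initial data means local asymptotic stability plus convergence to the equilibrium of every solution with initial data in that set. *)

theory Defs
  imports "HOL-Analysis.Analysis"
begin

definition rhs_x :: "real \<Rightarrow> real \<Rightarrow> real" where
  "rhs_x x y = x * (1 - x) - y * x"

definition rhs_y :: "real \<Rightarrow> real \<Rightarrow> real \<Rightarrow> real \<Rightarrow> real \<Rightarrow> real \<Rightarrow> real" where
  "rhs_y s Y \<tau> y yd xd = - s * y + Y * exp (- s * \<tau>) * yd * xd"

definition in_X :: "real \<Rightarrow> (real \<Rightarrow> real) \<Rightarrow> (real \<Rightarrow> real) \<Rightarrow> bool" where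
  "in_X \<tau> \<phi> \<psi> \<longleftrightarrow>
     continuous_on {-\<tau>..0} \<phi> \<and> continuous_on {-\<tau>..0} \<psi> \<and>
     (\<forall>\<theta>\<in>{-\<tau>..0}. \<phi> \<theta> \<ge> 0 \<and> \<psi> \<theta> \<ge> 0)"

definition in_X0 :: "real \<Rightarrow> (real \<Rightarrow> real) \<Rightarrow> (real \<Rightarrow> real) \<Rightarrow> bool" where
  "in_X0 \<tau> \<phi> \<psi> \<longleftrightarrow> in_X \<tau> \<phi> \<psi> \<and> \<phi> 0 > 0 \<and> (\<exists>\<theta>\<in>{-\<tau>..0}. \<phi> \<theta> * \<psi> \<theta> > 0)"

definition is_solution ::
  "real \<Rightarrow> real \<Rightarrow> real \<Rightarrow> (real \<Rightarrow> real) \<Rightarrow> (real \<Rightarrow> real) \<Rightarrow> (real \<Rightarrow> real) \<Rightarrow> (real \<Rightarrow> real) \<Rightarrow> bool" where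
  "is_solution s Y \<tau> \<phi> \<psi> x y \<longleftrightarrow>
     (\<forall>\<theta>\<in>{-\<tau>..0}. x \<theta> = \<phi> \<theta> \<and> y \<theta> = \<psi> \<theta>) \<and>
     continuous_on {-\<tau>..} x \<and> continuous_on {-\<tau>..} y \<and>
     (\<forall>t\<ge>0. (x has_real_derivative rhs_x (x t) (y t)) (at t within {0..}) \<and>
             (y has_real_derivative rhs_y s Y \<tau> (y t) (y (t - \<tau>)) (x (t - \<tau>))) (at t within {0..}))"

text \<open>Linearization at an equilibrium (a,b): u' = A u(t) + B u(t - tau), where
  A, B are the Jacobians of the right-hand side w.r.t. the non-delayed and delayed
  arguments. Characteristic function: det(lambda I - A - e^{-lambda tau} B).\<close>
definition char_fun :: "real \<Rightarrow> real \<Rightarrow> real \<Rightarrow> real \<times> real \<Rightarrow> complex \<Rightarrow> complex" where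
  "char_fun s Y \<tau> E z =
     (let a = fst E; b = snd E; c = Y * exp (- s * \<tau>);
          A11 = 1 - 2 * a - b; A12 = - a; A21 = 0; A22 = - s;
          B11 = 0; B12 = 0; B21 = c * b; B22 = c * a;
          e = exp (- z * of_real \<tau>);
          M11 = z - of_real A11 - e * of_real B11;
          M12 = - of_real A12 - e * of_real B12;
          M21 = - of_real A21 - e * of_real B21;
          M22 = z - of_real A22 - e * of_real B22
      in M11 * M22 - M12 * M21)"

definition locally_asymp_stable :: "real \<Rightarrow> real \<Rightarrow> real \<Rightarrow> real \<times> real \<Rightarrow> bool" where
  "locally_asymp_stable s Y \<tau> E \<longleftrightarrow> (\<forall>z. char_fun s Y \<tau> E z = 0 \<longrightarrow> Re z < 0)"

definition unstable :: "real \<Rightarrow> real \<Rightarrow> real \<Rightarrow> real \<times> real \<Rightarrow> bool" where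
  "unstable s Y \<tau> E \<longleftrightarrow> (\<exists>z. char_fun s Y \<tau> E z = 0 \<and> Re z > 0)"

definition globally_asymp_stable ::
  "real \<Rightarrow> real \<Rightarrow> real \<Rightarrow> real \<times> real \<Rightarrow> ((real \<Rightarrow> real) \<Rightarrow> (real \<Rightarrow> real) \<Rightarrow> bool) \<Rightarrow> bool" where
  "globally_asymp_stable s Y \<tau> E S \<longleftrightarrow>
     locally_asymp_stable s Y \<tau> E \<and>
     (\<forall>\<phi> \<psi> x y. S \<phi> \<psi> \<longrightarrow> is_solution s Y \<tau> \<phi> \<psi> x y \<longrightarrow>
        (x \<longlongrightarrow> fst E) at_top \<and> (y \<longlongrightarrow> snd E) at_top)"

definition E0 :: "real \<times> real" where "E0 = (0, 0)"
definition E1 :: "real \<times> real" where "E1 = (1, 0)"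
definition Eplus :: "real \<Rightarrow> real \<Rightarrow> real \<Rightarrow> real \<times> real" where
  "Eplus s Y \<tau> = (s / Y * exp (s * \<tau>), 1 - s / Y * exp (s * \<tau>))"

definition tau_c :: "real \<Rightarrow> real \<Rightarrow> real" where
  "tau_c s Y = (1 / s) * ln (Y / s)"

text \<open>Initial data in int R^2_+ for tau = 0: phi, psi on [0,0] with positive values.\<close>
definition in_int_R2plus :: "(real \<Rightarrow> real) \<Rightarrow> (real \<Rightarrow> real) \<Rightarrow> bool" where
  "in_int_R2plus \<phi> \<psi> \<longleftrightarrow> \<phi> 0 > 0 \<and> \<psi> 0 > 0"

end

theory Submission
  imports Defs
begin

(* Write c = Y e^(-s tau) for the gain of the delayed term.
   Linearisation: the characteristic function at E1 factors as (z + 1)(z + s - c e^(-z tau)); the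
   second factor has a positive real root iff s e^(s tau) < Y (intermediate value theorem), and
   no root with Re z >= 0 if c < s, since then |z + s| >= s > c >= |c e^(-z tau)|.
   Global behaviour: comparison for 1/x gives limsup x <= 1, and comparison for c x(t - tau) + y(t)
   gives an ultimate bound for y.  If c < s, then eventually y' <= -s y + q y(t - tau) with q < s, so
   y decays exponentially and x -> 1.  If c > s, a component that falls below a threshold
   decays at most exponentially for a fixed time, after which the other component is favourable
   (y small, resp. x >= (1 + s/c)/2) and it grows again; the resulting floors depend on s, c, tau
   only.  For tau = 0 the Volterra function V = x - x+ ln x + (y - y+ ln y)/c, where
   E+ = (x+, y+), satisfies V' = -(x - x+)^2, and Barbalat's lemma applied to V and then to ln x
   gives convergence to E+. *)

section \<open>Comparison principles for scalar functions\<close>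

lemma exp_lower_bound_by_deriv:
  fixes f f' :: "real \<Rightarrow> real"
  assumes "a \<le> b" "continuous_on {a..b} f"
    and "\<And>t. a < t \<Longrightarrow> t < b \<Longrightarrow> (f has_real_derivative f' t) (at t)"
    and "\<And>t. a < t \<Longrightarrow> t < b \<Longrightarrow> - l * f t \<le> f' t"
  shows "exp (- l * (b - a)) * f a \<le> f b"
proof -
  have "exp (l * (a - a)) * f a \<le> exp (l * (b - a)) * f b"
  proof (rule DERIV_nonneg_imp_increasing_open[where f = "\<lambda>t. exp (l * (t - a)) * f t"])
    fix t assume t: "a < t" "t < b"
    have "((\<lambda>t. exp (l * (t - a)) * f t) has_real_derivative exp (l * (t - a)) * (l * f t + f' t)) (at t)"
      using assms(3)[OF t] by (auto intro!: derivative_eq_intros simp: algebra_simps)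
    moreover have "0 \<le> exp (l * (t - a)) * (l * f t + f' t)" using assms(4)[OF t] by simp
    ultimately show "\<exists>y. ((\<lambda>t. exp (l * (t - a)) * f t) has_real_derivative y) (at t) \<and> 0 \<le> y"
      by blast
  qed (use assms in \<open>auto intro!: continuous_intros\<close>)
  then have "exp (- l * (b - a)) * f a \<le> exp (- l * (b - a)) * (exp (l * (b - a)) * f b)"
    by (intro mult_left_mono) simp_all
  also have "\<dots> = f b" by (simp add: mult.assoc[symmetric] exp_add[symmetric])
  finally show ?thesis .
qed

lemma affine_lower_bound_by_deriv:
  fixes f f' :: "real \<Rightarrow> real"
  assumes "a \<le> b" "continuous_on {a..b} f" "l > 0"
    and "\<And>t. a < t \<Longrightarrow> t < b \<Longrightarrow> (f has_real_derivative f' t) (at t)"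
    and "\<And>t. a < t \<Longrightarrow> t < b \<Longrightarrow> - l * f t + m \<le> f' t"
  shows "m / l + exp (- l * (b - a)) * (f a - m / l) \<le> f b"
proof -
  have "exp (- l * (b - a)) * (f a - m / l) \<le> f b - m / l"
  proof (rule exp_lower_bound_by_deriv[where f = "\<lambda>t. f t - m / l" and f' = f'])
    fix t assume t: "a < t" "t < b"
    show "((\<lambda>t. f t - m / l) has_real_derivative f' t) (at t)"
      using assms(4)[OF t] by (auto intro!: derivative_eq_intros)
    show "- l * (f t - m / l) \<le> f' t" using assms(3) assms(5)[OF t] by (simp add: algebra_simps)
  qed (use assms in \<open>auto intro!: continuous_intros\<close>)
  then show ?thesis by simp
qed

lemma affine_upper_bound_by_deriv:
  fixes f f' :: "real \<Rightarrow> real"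
  assumes "a \<le> b" "continuous_on {a..b} f" "l > 0"
    and "\<And>t. a < t \<Longrightarrow> t < b \<Longrightarrow> (f has_real_derivative f' t) (at t)"
    and "\<And>t. a < t \<Longrightarrow> t < b \<Longrightarrow> f' t \<le> - l * f t + m"
  shows "f b \<le> m / l + exp (- l * (b - a)) * (f a - m / l)"
proof -
  have "- m / l + exp (- l * (b - a)) * (- f a - - m / l) \<le> - f b"
  proof (rule affine_lower_bound_by_deriv[where f = "\<lambda>t. - f t" and f' = "\<lambda>t. - f' t"])
    fix t assume t: "a < t" "t < b"
    show "((\<lambda>t. - f t) has_real_derivative - f' t) (at t)"
      using assms(4)[OF t] by (rule derivative_intros)
    show "- l * - f t + - m \<le> - f' t" using assms(5)[OF t] by simp
  qed (use assms in \<open>auto intro!: continuous_intros\<close>)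
  then show ?thesis by (simp add: algebra_simps)
qed

lemma positive_unless_first_zero:
  fixes f :: "real \<Rightarrow> real"
  assumes "continuous_on {a..b} f" "f a > 0"
    and "\<And>t. a < t \<Longrightarrow> t \<le> b \<Longrightarrow> f t = 0 \<Longrightarrow> \<forall>r\<in>{a..<t}. f r > 0 \<Longrightarrow> False"
  shows "\<forall>t\<in>{a..b}. f t > 0"
proof (rule ccontr)
  assume "\<not> ?thesis"
  then obtain t where t: "t \<in> {a..b}" "f t \<le> 0" by force
  define S where "S = {a..t} \<inter> f -` {..0}"
  have "closed S"
    unfolding S_def using t
    by (intro continuous_closed_preimage continuous_on_subset[OF assms(1)]) auto
  moreover have "S \<noteq> {}" using t unfolding S_def by auto
  moreover have "bdd_below S" unfolding S_def by (rule bdd_below_Int1) simp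
  ultimately have "Inf S \<in> S" by (rule closed_contains_Inf[rotated -1])
  define t1 where "t1 = Inf S"
  have t1: "a \<le> t1" "t1 \<le> t" "f t1 \<le> 0" using \<open>Inf S \<in> S\<close> unfolding S_def t1_def by auto
  have below: "\<forall>r\<in>{a..<t1}. f r > 0"
  proof (rule ballI, rule ccontr)
    fix r assume r: "r \<in> {a..<t1}" "\<not> f r > 0"
    then have "r \<in> S" using t1 unfolding S_def by auto
    then have "t1 \<le> r" unfolding t1_def using \<open>bdd_below S\<close> by (rule cInf_lower)
    with r show False by auto
  qed
  have "a < t1" using t1 assms(2) by (cases "t1 = a") auto
  have "f t1 = 0"
  proof (rule ccontr)
    assume "f t1 \<noteq> 0"
    then have "f t1 < 0" using t1 by simp
    moreover have "continuous_on {a..t1} f"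
      using t1 t by (intro continuous_on_subset[OF assms(1)]) auto
    ultimately obtain r where r: "a \<le> r" "r \<le> t1" "f r = 0"
      using IVT2'[of f t1 0 a] assms(2) \<open>a < t1\<close> by auto
    then have "r \<in> {a..<t1}" using \<open>f t1 < 0\<close> by (cases "r = t1") auto
    then have "f r > 0" using below by blast
    with r(3) show False by simp
  qed
  then show False using assms(3)[OF \<open>a < t1\<close> _ _ below] t1 t by auto
qed

lemma deriv_nonpos_at_first_zero:
  fixes f :: "real \<Rightarrow> real"
  assumes "(f has_real_derivative l) (at t)" "a < t" "\<forall>r\<in>{a..<t}. f r > 0" "f t = 0"
  shows "l \<le> 0"
proof (rule ccontr)
  assume "\<not> l \<le> 0"
  then obtain d where d: "d > 0" "\<And>h. h > 0 \<Longrightarrow> h < d \<Longrightarrow> f (t - h) < f t"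
    using DERIV_pos_inc_left[OF assms(1)] by force
  define h where "h = min (d / 2) ((t - a) / 2)"
  have "h > 0" using d assms(2) unfolding h_def by simp
  moreover have "h \<le> d / 2" unfolding h_def by (rule min.cobounded1)
  moreover have "h \<le> (t - a) / 2" unfolding h_def by (rule min.cobounded2)
  ultimately have "h < d" "t - h \<in> {a..<t}" using d(1) by auto
  then show False using d(2)[of h] assms(3,4) by force
qed

lemma positive_of_deriv_proportional:
  fixes f g :: "real \<Rightarrow> real"
  assumes "continuous_on {a..b} f" "continuous_on {a..b} g" "f a > 0"
    and "\<And>t. a < t \<Longrightarrow> t \<le> b \<Longrightarrow> (f has_real_derivative f t * g t) (at t)"
  shows "\<forall>t\<in>{a..b}. f t > 0"
proof (rule positive_unless_first_zero[OF assms(1,3)])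
  fix t1 assume t1: "a < t1" "t1 \<le> b" "f t1 = 0" and below: "\<forall>r\<in>{a..<t1}. f r > 0"
  have "continuous_on {a..t1} g" using t1 by (intro continuous_on_subset[OF assms(2)]) auto
  then obtain r0 where r0: "r0 \<in> {a..t1}" "\<forall>r\<in>{a..t1}. g r0 \<le> g r"
    using continuous_attains_inf[of "{a..t1}" g] t1 by auto
  have "exp (- (- g r0) * (t1 - a)) * f a \<le> f t1"
  proof (rule exp_lower_bound_by_deriv)
    show "continuous_on {a..t1} f" using t1 by (intro continuous_on_subset[OF assms(1)]) auto
    fix r assume r: "a < r" "r < t1"
    show "(f has_real_derivative f r * g r) (at r)" using assms(4) r t1 by simp
    have "0 < f r" "g r0 \<le> g r" using bspec[OF below] r0(2) r by auto
    then show "- (- g r0) * f r \<le> f r * g r"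
      using mult_left_mono[of "g r0" "g r" "f r"] by (simp add: mult.commute)
  qed (use t1 in simp)
  moreover have "0 < exp (- (- g r0) * (t1 - a)) * f a" using assms(3) by simp
  ultimately show False using t1(3) by simp
qed

lemma last_crossing:
  fixes f :: "real \<Rightarrow> real"
  assumes "a \<le> b" "continuous_on {a..b} f" "d \<le> f a" "f b < d"
  obtains c where "a \<le> c" "c < b" "f c = d" "\<forall>r\<in>{c<..b}. f r < d"
proof -
  define S where "S = {a..b} \<inter> f -` {d..}"
  have "closed S" unfolding S_def by (intro continuous_closed_preimage assms(2)) auto
  moreover have "S \<noteq> {}" using assms unfolding S_def by auto
  moreover have "bdd_above S" unfolding S_def by (rule bdd_above_Int1) simp
  ultimately have "Sup S \<in> S" by (rule closed_contains_Sup[rotated -1])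
  define c where "c = Sup S"
  have c: "a \<le> c" "c \<le> b" "d \<le> f c" using \<open>Sup S \<in> S\<close> unfolding S_def c_def by auto
  have above: "\<forall>r\<in>{c<..b}. f r < d"
  proof (rule ballI, rule ccontr)
    fix r assume r: "r \<in> {c<..b}" "\<not> f r < d"
    then have "r \<in> S" using c unfolding S_def by auto
    then have "r \<le> c" unfolding c_def using \<open>bdd_above S\<close> by (rule cSup_upper)
    with r show False by auto
  qed
  have "c < b" using c assms(4) by (cases "c = b") auto
  have "f c = d"
  proof (rule ccontr)
    assume "f c \<noteq> d"
    then have "d < f c" using c by simp
    moreover have "continuous_on {c..b} f"
      using c by (intro continuous_on_subset[OF assms(2)]) auto
    ultimately obtain r where "c \<le> r" "r \<le> b" "f r = d"
      using IVT2'[of f b d c] assms(4) \<open>c < b\<close> by auto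
    then show False using above \<open>d < f c\<close> by (cases "r = c") auto
  qed
  then show ?thesis using that c \<open>c < b\<close> above by blast
qed

lemma ge_after_excursions:
  fixes f :: "real \<Rightarrow> real"
  assumes "continuous_on {t0..} f" "\<epsilon> \<le> \<delta>" "\<delta> \<le> f t0"
    and "\<And>a t. t0 \<le> a \<Longrightarrow> a \<le> t \<Longrightarrow> f a = \<delta> \<Longrightarrow> \<forall>r\<in>{a..t}. f r \<le> \<delta> \<Longrightarrow> \<epsilon> \<le> f t"
  shows "\<forall>t\<ge>t0. \<epsilon> \<le> f t"
proof (intro allI impI)
  fix t assume "t0 \<le> t"
  show "\<epsilon> \<le> f t"
  proof (cases "\<delta> \<le> f t")
    case False
    have cont: "continuous_on {t0..t} f" by (rule continuous_on_subset[OF assms(1)]) auto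
    obtain a where a: "t0 \<le> a" "a < t" "f a = \<delta>" "\<forall>r\<in>{a<..t}. f r < \<delta>"
      by (rule last_crossing[OF \<open>t0 \<le> t\<close> cont assms(3)]) (use False in auto)
    have "\<forall>r\<in>{a..t}. f r \<le> \<delta>"
    proof
      fix r assume "r \<in> {a..t}"
      then consider "r = a" | "r \<in> {a<..t}" by fastforce
      then show "f r \<le> \<delta>"
      proof cases
        case 2
        then show ?thesis using a(4) by fastforce
      qed (use a(3) in simp)
    qed
    then show ?thesis using assms(4) a by auto
  qed (use assms(2) in simp)
qed

lemma tendsto_exp_neg_at_top:
  fixes l a :: real
  assumes "l > 0"
  shows "((\<lambda>t. exp (- l * (t - a))) \<longlongrightarrow> 0) at_top"
proof -
  have "filterlim (\<lambda>t. t - a) at_top at_top"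
    using filterlim_tendsto_add_at_top[OF tendsto_const[of "- a"] filterlim_ident] by simp
  then have "filterlim (\<lambda>t. l * (t - a)) at_top at_top"
    using assms by (intro filterlim_tendsto_pos_mult_at_top[OF tendsto_const])
  then have "filterlim (\<lambda>t. - (l * (t - a))) at_bot at_top"
    by (simp add: filterlim_uminus_at_top)
  from filterlim_compose[OF exp_at_bot this] show ?thesis by simp
qed

lemma exp_neg_le_inverse:
  fixes z :: real
  assumes "0 < z"
  shows "exp (- z) \<le> 1 / z"
proof -
  have "z \<le> exp z" using exp_ge_add_one_self[of z] by linarith
  then show ?thesis using assms by (simp add: exp_minus field_simps)
qed

lemma tendsto_Inf_of_decreasing:
  fixes V :: "real \<Rightarrow> real"
  assumes "\<And>t r. T \<le> t \<Longrightarrow> t \<le> r \<Longrightarrow> V r \<le> V t" "\<And>t. T \<le> t \<Longrightarrow> b \<le> V t"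
  shows "(V \<longlongrightarrow> Inf (V ` {T..})) at_top"
proof -
  have bdd: "bdd_below (V ` {T..})" using assms(2) by (intro bdd_belowI2[where m = b]) auto
  show ?thesis
  proof (rule order_tendstoI)
    fix v assume "v < Inf (V ` {T..})"
    then have "\<forall>t\<ge>T. v < V t"
      using cInf_lower[OF _ bdd] by (meson atLeast_iff imageI order.strict_trans2)
    then show "\<forall>\<^sub>F t in at_top. v < V t" by (auto simp: eventually_at_top_linorder)
  next
    fix v assume "Inf (V ` {T..}) < v"
    then obtain t1 where "T \<le> t1" "V t1 < v" using cInf_less_iff[OF _ bdd] by auto
    then have "\<forall>t\<ge>t1. V t < v" using assms(1) by (meson order.strict_trans1)
    then show "\<forall>\<^sub>F t in at_top. V t < v" by (auto simp: eventually_at_top_linorder)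
  qed
qed

lemma barbalat:
  fixes F f f' :: "real \<Rightarrow> real"
  assumes "(F \<longlongrightarrow> l) at_top"
    and F: "\<And>t. T \<le> t \<Longrightarrow> (F has_real_derivative f t) (at t)"
    and f: "\<And>t. T \<le> t \<Longrightarrow> (f has_real_derivative f' t) (at t)"
    and bound: "\<And>t. T \<le> t \<Longrightarrow> \<bar>f' t\<bar> \<le> M"
  shows "(f \<longlongrightarrow> 0) at_top"
proof (rule tendstoI)
  fix e :: real assume "e > 0"
  define d where "d = e / (2 * (\<bar>M\<bar> + 1))"
  have "d > 0" "d * \<bar>M\<bar> \<le> e / 2" using \<open>e > 0\<close> unfolding d_def by (auto simp: field_simps)
  obtain N where N: "\<And>t. N \<le> t \<Longrightarrow> \<bar>F t - l\<bar> < d * e / 4"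
    using tendstoD[OF assms(1), of "d * e / 4"] \<open>d > 0\<close> \<open>e > 0\<close>
    by (auto simp: eventually_at_top_linorder dist_real_def)
  have "\<bar>f t\<bar> < e" if t: "max T N \<le> t" for t
  proof (rule ccontr)
    assume "\<not> \<bar>f t\<bar> < e"
    obtain z where z: "t < z" "z < t + d" "F (t + d) - F t = d * f z"
      using MVT2[of t "t + d" F f] F t \<open>d > 0\<close> by auto
    obtain w where w: "t < w" "w < z" "f z - f t = (z - t) * f' w"
      using MVT2[of t z f f'] f t z by auto
    have "\<bar>f z - f t\<bar> \<le> d * \<bar>M\<bar>"
      unfolding w(3) abs_mult using bound[of w] w z t
      by (intro mult_mono) auto
    then have "e / 2 \<le> \<bar>f z\<bar>" using \<open>\<not> \<bar>f t\<bar> < e\<close> \<open>d * \<bar>M\<bar> \<le> e / 2\<close> by linarith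
    then have "d * e / 2 \<le> \<bar>F (t + d) - F t\<bar>"
      unfolding z(3) abs_mult using \<open>d > 0\<close> by (simp add: mult_left_mono)
    moreover have "\<bar>F (t + d) - F t\<bar> < d * e / 2" using N[of t] N[of "t + d"] t \<open>d > 0\<close> by arith
    ultimately show False by simp
  qed
  then show "\<forall>\<^sub>F t in at_top. dist (f t) 0 < e"
    unfolding eventually_at_top_linorder by (intro exI[of _ "max T N"]) simp
qed

lemma volterra_ge:
  fixes z k :: real
  assumes "z > 0" "k > 0"
  shows "k - k * ln k \<le> z - k * ln z"
proof -
  have "k * ln (z / k) \<le> k * (z / k - 1)"
    using ln_le_minus_one assms by (intro mult_left_mono) auto
  then show ?thesis using assms by (simp add: ln_div algebra_simps)
qed

section \<open>Linear delay differential inequalities\<close>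

text \<open>A rate \<open>m > 0\<close> with \<open>s - m - q exp (m \<tau>) > 0\<close>: then \<open>exp (- m t)\<close> is a strict
  supersolution of \<open>y' = -s y + q y(t - \<tau>)\<close>, provided \<open>q < s\<close>.\<close>
definition decay_rate :: "real \<Rightarrow> real \<Rightarrow> real \<Rightarrow> real" where
  "decay_rate s q \<tau> = min ((s - q) / 4) (ln (1 + (s - q) / (2 * q)) / (\<tau> + 1))"

lemma decay_rate_margin:
  assumes "0 < q" "q < s" "\<tau> \<ge> 0"
  shows "decay_rate s q \<tau> > 0" "s - decay_rate s q \<tau> - q * exp (decay_rate s q \<tau> * \<tau>) > 0"
proof -
  define L where "L = ln (1 + (s - q) / (2 * q))"
  define m where "m = decay_rate s q \<tau>"
  have "L > 0" unfolding L_def using assms by (intro ln_gt_zero) auto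
  then show "decay_rate s q \<tau> > 0" using assms unfolding decay_rate_def L_def by auto
  have "m * \<tau> \<le> L / (\<tau> + 1) * \<tau>"
    unfolding m_def decay_rate_def L_def using assms by (intro mult_right_mono) auto
  also have "\<dots> \<le> L" using \<open>L > 0\<close> assms by (simp add: field_simps)
  finally have "q * exp (m * \<tau>) \<le> q * exp L" using assms by simp
  also have "\<dots> = q + (s - q) / 2" unfolding L_def using assms by (simp add: field_simps)
  finally have "q * exp (m * \<tau>) \<le> q + (s - q) / 2" .
  moreover have "m \<le> (s - q) / 4" unfolding m_def decay_rate_def by (rule min.cobounded1)
  ultimately show "s - decay_rate s q \<tau> - q * exp (decay_rate s q \<tau> * \<tau>) > 0"
    using assms unfolding m_def by argo
qed

text \<open>Dually, a rate \<open>n > 0\<close> with \<open>s q exp (- n \<tau>) - s - n > 0\<close>: then \<open>exp (n t)\<close> is a strict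
  subsolution of \<open>y' = -s y + s q y(t - \<tau>)\<close>, provided \<open>q > 1\<close>.\<close>
definition growth_rate :: "real \<Rightarrow> real \<Rightarrow> real \<Rightarrow> real" where
  "growth_rate s q \<tau> = min (s * (q - 1) / 4) (ln (2 * q / (q + 1)) / (\<tau> + 1))"

lemma growth_rate_margin:
  assumes "s > 0" "q > 1" "\<tau> \<ge> 0"
  shows "growth_rate s q \<tau> > 0" "s * q * exp (- growth_rate s q \<tau> * \<tau>) - s - growth_rate s q \<tau> > 0"
proof -
  define L where "L = ln (2 * q / (q + 1))"
  define n where "n = growth_rate s q \<tau>"
  have "L > 0" unfolding L_def using assms by (intro ln_gt_zero) (auto simp: field_simps)
  then show "growth_rate s q \<tau> > 0" using assms unfolding growth_rate_def L_def by auto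
  have "n * \<tau> \<le> L / (\<tau> + 1) * \<tau>"
    unfolding n_def growth_rate_def L_def using assms by (intro mult_right_mono) auto
  also have "\<dots> \<le> L" using \<open>L > 0\<close> assms by (simp add: field_simps)
  finally have "exp (- L) \<le> exp (- n * \<tau>)" by simp
  moreover have "exp (- L) = (q + 1) / (2 * q)"
    unfolding L_def using assms by (simp add: exp_minus field_simps)
  ultimately have "s * q * ((q + 1) / (2 * q)) \<le> s * q * exp (- n * \<tau>)"
    using assms by (intro mult_left_mono) auto
  moreover have "s * q * ((q + 1) / (2 * q)) = s + s * (q - 1) / 2" using assms by (simp add: field_simps)
  moreover have "n \<le> s * (q - 1) / 4" unfolding n_def growth_rate_def by (rule min.cobounded1)
  moreover have "s * (q - 1) > 0" using assms by simp
  ultimately show "s * q * exp (- growth_rate s q \<tau> * \<tau>) - s - growth_rate s q \<tau> > 0"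
    unfolding n_def by argo
qed

lemma delay_decay:
  fixes y y' :: "real \<Rightarrow> real"
  assumes "0 < q" "q < s" "\<tau> \<ge> 0" "B > 0" "a \<le> b"
    and "continuous_on {a..b} y"
    and init: "\<And>r. a \<le> r \<Longrightarrow> r \<le> a + \<tau> \<Longrightarrow> y r \<le> B"
    and deriv: "\<And>r. a + \<tau> < r \<Longrightarrow> r \<le> b \<Longrightarrow> (y has_real_derivative y' r) (at r)"
    and ineq: "\<And>r. a + \<tau> < r \<Longrightarrow> r \<le> b \<Longrightarrow> y' r \<le> - s * y r + q * y (r - \<tau>)"
  shows "\<forall>r\<in>{a..b}. y r < 2 * B * exp (- decay_rate s q \<tau> * (r - a - \<tau>))"
proof -
  define m where "m = decay_rate s q \<tau>"
  have m: "m > 0" "s - m - q * exp (m * \<tau>) > 0" using decay_rate_margin[OF assms(1-3)] unfolding m_def by auto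
  define z where "z r = 2 * B * exp (- m * (r - a - \<tau>))" for r
  have z_ge: "2 * B \<le> z r" if "r \<le> a + \<tau>" for r
  proof -
    have "m * (r - a - \<tau>) \<le> 0" using that m(1) by (intro mult_nonneg_nonpos) auto
    then show ?thesis unfolding z_def using assms(4) by simp
  qed
  have z_shift: "z (r - \<tau>) = z r * exp (m * \<tau>)" for r
    unfolding z_def by (simp add: mult.assoc exp_add[symmetric] algebra_simps)
  have "\<forall>t\<in>{a..b}. z t - y t > 0"
  proof (rule positive_unless_first_zero)
    show "continuous_on {a..b} (\<lambda>t. z t - y t)" unfolding z_def by (intro continuous_intros assms)
    show "z a - y a > 0" using z_ge[of a] init[of a] assms(3,4) by simp
    fix t assume t: "a < t" "t \<le> b" "z t - y t = 0" and below: "\<forall>r\<in>{a..<t}. z r - y r > 0"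
    show False
    proof (cases "t \<le> a + \<tau>")
      case True
      then show False using z_ge[of t] init[of t] t assms(4) by auto
    next
      case False
      have "y (t - \<tau>) \<le> z (t - \<tau>)"
      proof (cases "\<tau> = 0")
        case False
        then have "t - \<tau> \<in> {a..<t}" using \<open>\<not> t \<le> a + \<tau>\<close> assms(3) by auto
        then show ?thesis using bspec[OF below] by fastforce
      qed (use t(3) in simp)
      then have "q * y (t - \<tau>) \<le> q * z t * exp (m * \<tau>)"
        unfolding z_shift using assms(1) by (simp add: mult_left_mono mult.assoc)
      moreover have "0 < z t * (s - m - q * exp (m * \<tau>))" unfolding z_def using m assms(4) by simp
      ultimately have "0 < - m * z t - y' t"
        using ineq[of t] False t by (simp add: algebra_simps)
      moreover have "((\<lambda>t. z t - y t) has_real_derivative - m * z t - y' t) (at t)"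
        unfolding z_def using deriv[of t] False t by (auto intro!: derivative_eq_intros simp: algebra_simps)
      ultimately show False using deriv_nonpos_at_first_zero[OF _ t(1) below t(3)] by fastforce
    qed
  qed
  then show ?thesis unfolding z_def m_def by auto
qed

lemma delay_growth:
  fixes y y' :: "real \<Rightarrow> real"
  assumes "s > 0" "q > 1" "\<tau> \<ge> 0" "B > 0" "a \<le> b"
    and "continuous_on {a..b} y"
    and init: "\<And>r. a - \<tau> \<le> r \<Longrightarrow> r \<le> a \<Longrightarrow> B < y r"
    and deriv: "\<And>r. a < r \<Longrightarrow> r \<le> b \<Longrightarrow> (y has_real_derivative y' r) (at r)"
    and ineq: "\<And>r. a < r \<Longrightarrow> r \<le> b \<Longrightarrow> - s * y r + s * q * y (r - \<tau>) \<le> y' r"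
  shows "\<forall>r\<in>{a..b}. B * exp (growth_rate s q \<tau> * (r - a)) < y r"
proof -
  define n where "n = growth_rate s q \<tau>"
  have n: "n > 0" "s * q * exp (- n * \<tau>) - s - n > 0" using growth_rate_margin[OF assms(1-3)] unfolding n_def by auto
  define z where "z r = B * exp (n * (r - a))" for r
  have z_le: "z r \<le> B" if "r \<le> a" for r
  proof -
    have "n * (r - a) \<le> 0" using that n(1) by (intro mult_nonneg_nonpos) auto
    then show ?thesis unfolding z_def using assms(4) by simp
  qed
  have z_shift: "z (r - \<tau>) = z r * exp (- n * \<tau>)" for r
    unfolding z_def by (simp add: mult.assoc exp_add[symmetric] algebra_simps)
  have "\<forall>t\<in>{a..b}. y t - z t > 0"
  proof (rule positive_unless_first_zero)
    show "continuous_on {a..b} (\<lambda>t. y t - z t)" unfolding z_def by (intro continuous_intros assms)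
    show "y a - z a > 0" using z_le[of a] init[of a] assms(3) by simp
    fix t assume t: "a < t" "t \<le> b" "y t - z t = 0" and below: "\<forall>r\<in>{a..<t}. y r - z r > 0"
    have "z (t - \<tau>) \<le> y (t - \<tau>)"
    proof (cases "t - \<tau> < a \<or> \<tau> = 0")
      case True
      then show ?thesis using z_le[of "t - \<tau>"] init[of "t - \<tau>"] t by auto
    next
      case False
      then have "t - \<tau> \<in> {a..<t}" using assms(3) by auto
      then show ?thesis using bspec[OF below] by fastforce
    qed
    then have "s * q * (z t * exp (- n * \<tau>)) \<le> s * q * y (t - \<tau>)"
      unfolding z_shift using assms(1,2) by (intro mult_left_mono) auto
    moreover have "0 < z t * (s * q * exp (- n * \<tau>) - s - n)" unfolding z_def using n assms(4) by simp
    ultimately have "0 < y' t - n * z t"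
      using ineq[of t] t by (simp add: algebra_simps)
    moreover have "((\<lambda>t. y t - z t) has_real_derivative y' t - n * z t) (at t)"
      unfolding z_def using deriv[of t] t by (auto intro!: derivative_eq_intros simp: algebra_simps)
    ultimately show False using deriv_nonpos_at_first_zero[OF _ t(1) below t(3)] by fastforce
  qed
  then show ?thesis unfolding z_def n_def by auto
qed

text \<open>The perturbation \<open>\<epsilon> exp (P t)\<close> turns the non-strict inequality into a strict one at a
  first zero.\<close>
lemma delay_nonneg:
  fixes y y' k :: "real \<Rightarrow> real"
  assumes "s > 0" "\<tau> \<ge> 0" "0 \<le> t"
    and "continuous_on {-\<tau>..t} y"
    and init: "\<And>r. - \<tau> \<le> r \<Longrightarrow> r \<le> 0 \<Longrightarrow> 0 \<le> y r"
    and deriv: "\<And>r. 0 < r \<Longrightarrow> r \<le> t \<Longrightarrow> (y has_real_derivative y' r) (at r)"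
    and ineq: "\<And>r. 0 < r \<Longrightarrow> r \<le> t \<Longrightarrow> - s * y r + k r * y (r - \<tau>) \<le> y' r"
    and k: "\<And>r. 0 < r \<Longrightarrow> r \<le> t \<Longrightarrow> 0 \<le> k r \<and> k r \<le> P"
  shows "0 \<le> y t"
proof (rule ccontr)
  assume "\<not> 0 \<le> y t"
  have "P \<ge> 0" using k[of t] init[of 0] \<open>\<not> 0 \<le> y t\<close> assms(2,3) by (cases "t = 0") auto
  define \<epsilon> where "\<epsilon> = - y t / (2 * exp (P * t))"
  have "\<epsilon> > 0" unfolding \<epsilon>_def using \<open>\<not> 0 \<le> y t\<close> by (intro divide_pos_pos) auto
  define f where "f r = y r + \<epsilon> * exp (P * r)" for r
  have "\<forall>r\<in>{0..t}. f r > 0"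
  proof (rule positive_unless_first_zero)
    show "continuous_on {0..t} f"
      unfolding f_def using assms(2) by (intro continuous_intros continuous_on_subset[OF assms(4)]) auto
    show "f 0 > 0" unfolding f_def using init[of 0] assms(2) \<open>\<epsilon> > 0\<close> by simp
    fix t1 assume t1: "0 < t1" "t1 \<le> t" "f t1 = 0" and below: "\<forall>r\<in>{0..<t1}. f r > 0"
    define E where "E = \<epsilon> * exp (P * t1)"
    have "E > 0" unfolding E_def using \<open>\<epsilon> > 0\<close> by simp
    have y_t1: "y t1 = - E" using t1(3) unfolding f_def E_def by simp
    have "- E \<le> y (t1 - \<tau>)"
    proof (cases "t1 - \<tau> \<le> 0 \<or> \<tau> = 0")
      case True
      then show ?thesis using init[of "t1 - \<tau>"] y_t1 t1 \<open>E > 0\<close> by auto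
    next
      case False
      then have "t1 - \<tau> \<in> {0..<t1}" using assms(2) by auto
      then have "- \<epsilon> * exp (P * (t1 - \<tau>)) < y (t1 - \<tau>)" using bspec[OF below] unfolding f_def by fastforce
      moreover have "\<epsilon> * exp (P * (t1 - \<tau>)) \<le> E"
        unfolding E_def using \<open>\<epsilon> > 0\<close> \<open>P \<ge> 0\<close> assms(2) by (simp add: mult_left_mono)
      ultimately show ?thesis by simp
    qed
    have "k t1 * (- E) \<le> k t1 * y (t1 - \<tau>)"
      using \<open>- E \<le> y (t1 - \<tau>)\<close> k[OF t1(1,2)] by (intro mult_left_mono) auto
    moreover have "k t1 * E \<le> P * E" using k[OF t1(1,2)] \<open>E > 0\<close> by (intro mult_right_mono) auto
    moreover have "- s * y t1 = s * E" "0 < s * E" using y_t1 assms(1) \<open>E > 0\<close> by simp_all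
    ultimately have "0 < y' t1 + P * E" using ineq[OF t1(1,2)] by linarith
    moreover have "(f has_real_derivative y' t1 + P * E) (at t1)"
      unfolding f_def E_def using deriv[OF t1(1,2)] by (auto intro!: derivative_eq_intros)
    ultimately show False using deriv_nonpos_at_first_zero[OF _ t1(1) below t1(3)] by fastforce
  qed
  moreover have "t \<in> {0..t}" using assms(3) by simp
  ultimately have "f t > 0" by blast
  moreover have "f t = y t / 2" unfolding f_def \<epsilon>_def by simp
  ultimately show False using \<open>\<not> 0 \<le> y t\<close> by simp
qed

section \<open>Positivity and ultimate bounds of solutions\<close>

locale delay_system =
  fixes s c \<tau> :: real
  assumes s_pos: "s > 0" and c_pos: "c > 0" and tau_nonneg: "\<tau> \<ge> 0"
begin

definition y_bound :: real where
  "y_bound = c * (1 + s)\<^sup>2 / (4 * s) + 1"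

lemma y_bound_ge_1: "1 \<le> y_bound"
  unfolding y_bound_def using s_pos c_pos by simp

end

text \<open>Solutions with delayed gain \<open>c = Y exp (- s \<tau>)\<close>; the initial data are the restrictions
  of \<open>x\<close> and \<open>y\<close> to \<open>[-\<tau>, 0]\<close>.\<close>
locale delay_solution = delay_system +
  fixes x y :: "real \<Rightarrow> real"
  assumes continuous_x: "continuous_on {-\<tau>..} x" and continuous_y: "continuous_on {-\<tau>..} y"
    and initial_nonneg: "\<And>\<theta>. - \<tau> \<le> \<theta> \<Longrightarrow> \<theta> \<le> 0 \<Longrightarrow> 0 \<le> x \<theta> \<and> 0 \<le> y \<theta>"
    and x0_pos: "0 < x 0"
    and x_deriv_within: "\<And>t. 0 \<le> t \<Longrightarrow>
      (x has_real_derivative x t * (1 - x t - y t)) (at t within {0..})"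
    and y_deriv_within: "\<And>t. 0 \<le> t \<Longrightarrow>
      (y has_real_derivative c * x (t - \<tau>) * y (t - \<tau>) - s * y t) (at t within {0..})"
begin

lemma x_deriv: "0 < t \<Longrightarrow> (x has_real_derivative x t * (1 - x t - y t)) (at t)"
  using x_deriv_within[of t] at_within_interior[of t "{0..}"] by simp

lemma y_deriv: "0 < t \<Longrightarrow> (y has_real_derivative c * x (t - \<tau>) * y (t - \<tau>) - s * y t) (at t)"
  using y_deriv_within[of t] at_within_interior[of t "{0..}"] by simp

lemma continuous_on_x: "- \<tau> \<le> a \<Longrightarrow> continuous_on {a..b} x"
  by (rule continuous_on_subset[OF continuous_x]) auto

lemma continuous_on_y: "- \<tau> \<le> a \<Longrightarrow> continuous_on {a..b} y"
  by (rule continuous_on_subset[OF continuous_y]) auto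

lemma x_pos: "0 \<le> t \<Longrightarrow> 0 < x t"
proof -
  assume "0 \<le> t"
  have "\<forall>r\<in>{0..t}. 0 < x r"
    by (rule positive_of_deriv_proportional[where g = "\<lambda>r. 1 - x r - y r"])
      (use tau_nonneg x0_pos x_deriv in \<open>auto intro!: continuous_intros continuous_on_x continuous_on_y\<close>)
  then show ?thesis using \<open>0 \<le> t\<close> by auto
qed

lemma x_nonneg: "- \<tau> \<le> t \<Longrightarrow> 0 \<le> x t"
  using x_pos[of t] initial_nonneg[of t] by (cases "t \<le> 0") auto

lemma y_nonneg:
  assumes "- \<tau> \<le> t"
  shows "0 \<le> y t"
proof (cases "t \<le> 0")
  case True
  then show ?thesis using initial_nonneg[of t] assms by simp
next
  case False
  have "continuous_on {-\<tau>..t} x" by (rule continuous_on_x) simp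
  then obtain r0 where r0: "\<forall>r\<in>{-\<tau>..t}. x r \<le> x r0"
    using continuous_attains_sup[of "{-\<tau>..t}" x] False tau_nonneg by auto
  have k: "0 \<le> c * x (r - \<tau>) \<and> c * x (r - \<tau>) \<le> c * x r0" if "0 < r" "r \<le> t" for r
  proof -
    have "r - \<tau> \<in> {-\<tau>..t}" using that tau_nonneg by simp
    then show ?thesis using x_nonneg[of "r - \<tau>"] bspec[OF r0] c_pos by (simp add: mult_left_mono)
  qed
  show ?thesis
    by (rule delay_nonneg[OF s_pos tau_nonneg _ continuous_on_y _ y_deriv _ k])
      (use False initial_nonneg in auto)
qed

lemma delayed_term_nonneg: "0 \<le> t \<Longrightarrow> 0 \<le> c * x (t - \<tau>) * y (t - \<tau>)"
  using x_nonneg[of "t - \<tau>"] y_nonneg[of "t - \<tau>"] c_pos by simp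

lemma y_ge_exp_decay: "0 \<le> a \<Longrightarrow> a \<le> t \<Longrightarrow> exp (- s * (t - a)) * y a \<le> y t"
  by (rule exp_lower_bound_by_deriv[where f' = "\<lambda>r. c * x (r - \<tau>) * y (r - \<tau>) - s * y r"])
    (use tau_nonneg y_deriv delayed_term_nonneg in \<open>auto intro: continuous_on_y\<close>)

lemma y_pos_after: "0 \<le> a \<Longrightarrow> 0 < y a \<Longrightarrow> a \<le> t \<Longrightarrow> 0 < y t"
  using y_ge_exp_decay[of a t] by (smt (verit) exp_gt_zero mult_pos_pos)

lemma inv_x_deriv: "0 < t \<Longrightarrow> ((\<lambda>r. 1 / x r) has_real_derivative - 1 / x t + 1 + y t / x t) (at t)"
  using x_deriv[of t] x_pos[of t]
  by (auto intro!: derivative_eq_intros simp: field_simps power2_eq_square)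

lemma continuous_on_inv_x:
  assumes "0 \<le> a"
  shows "continuous_on {a..b} (\<lambda>r. 1 / x r)"
proof -
  have "\<forall>r\<in>{a..b}. x r \<noteq> 0"
  proof
    fix r assume "r \<in> {a..b}"
    then show "x r \<noteq> 0" using x_pos[of r] assms by simp
  qed
  then show ?thesis using assms tau_nonneg by (intro continuous_intros continuous_on_x) auto
qed

lemma x_le_logistic_bound: "0 < t \<Longrightarrow> x t \<le> 1 / (1 - exp (- t))"
proof -
  assume "0 < t"
  have "1 / 1 + exp (- 1 * (t - 0)) * (1 / x 0 - 1 / 1) \<le> 1 / x t"
  proof (rule affine_lower_bound_by_deriv[OF _ continuous_on_inv_x,
        where f' = "\<lambda>r. - 1 / x r + 1 + y r / x r"])
    fix r assume "0 < r" "r < t"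
    then show "((\<lambda>r. 1 / x r) has_real_derivative - 1 / x r + 1 + y r / x r) (at r)"
      using inv_x_deriv by simp
    show "- 1 * (1 / x r) + 1 \<le> - 1 / x r + 1 + y r / x r"
      using x_pos[of r] y_nonneg[of r] \<open>0 < r\<close> tau_nonneg by simp
  qed (use \<open>0 < t\<close> in auto)
  moreover have "0 < exp (- t) / x 0" using x0_pos by simp
  ultimately have "1 - exp (- t) \<le> 1 / x t" by (simp add: algebra_simps)
  moreover have "0 < 1 - exp (- t)" using \<open>0 < t\<close> by simp
  ultimately show ?thesis using x_pos[of t] \<open>0 < t\<close> by (simp add: field_simps)
qed

lemma eventually_x_less: "0 < e \<Longrightarrow> \<forall>\<^sub>F t in at_top. x t < 1 + e"
proof -
  assume "0 < e"
  have exp_lim: "((\<lambda>t::real. exp (- t)) \<longlongrightarrow> 0) at_top" using tendsto_exp_neg_at_top[of 1 0] by simp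
  have lim: "((\<lambda>t::real. 1 / (1 - exp (- t))) \<longlongrightarrow> 1 / (1 - 0)) at_top"
    by (intro tendsto_divide tendsto_diff tendsto_const exp_lim) simp_all
  have "\<forall>\<^sub>F t in at_top. 1 / (1 - exp (- t)) < 1 + e"
    using order_tendstoD(2)[OF lim, of "1 + e"] \<open>0 < e\<close> by simp
  then show ?thesis using eventually_gt_at_top[of 0]
    by eventually_elim (use x_le_logistic_bound in fastforce)
qed

lemma eventually_y_le_bound: "\<forall>\<^sub>F t in at_top. y t \<le> y_bound"
proof -
  define C where "C = c * (1 + s)\<^sup>2 / 4"
  define U where "U r = c * x (r - \<tau>) + y r" for r
  have U_le: "U t \<le> C / s + exp (- s * (t - \<tau>)) * (U \<tau> - C / s)" if "\<tau> \<le> t" for t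
  proof (rule affine_upper_bound_by_deriv[OF that _ s_pos])
    show "continuous_on {\<tau>..t} U" unfolding U_def using tau_nonneg
      by (intro continuous_intros continuous_on_compose2[OF continuous_x] continuous_on_y) auto
    fix r assume r: "\<tau> < r" "r < t"
    have "((\<lambda>r. x (r - \<tau>)) has_real_derivative
        x (r - \<tau>) * (1 - x (r - \<tau>) - y (r - \<tau>))) (at r)"
      using DERIV_shift[of x _ r "- \<tau>"] x_deriv[of "r - \<tau>"] r by simp
    then show "(U has_real_derivative c * (x (r - \<tau>) * (1 - x (r - \<tau>) - y (r - \<tau>)))
        + (c * x (r - \<tau>) * y (r - \<tau>) - s * y r)) (at r)"
      unfolding U_def using y_deriv[of r] r tau_nonneg by (auto intro!: derivative_eq_intros)
    have "(1 + s)\<^sup>2 / 4 - x (r - \<tau>) * (1 + s - x (r - \<tau>)) = (x (r - \<tau>) - (1 + s) / 2)\<^sup>2"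
      by (simp add: power2_eq_square field_simps)
    then have "x (r - \<tau>) * (1 + s - x (r - \<tau>)) \<le> (1 + s)\<^sup>2 / 4"
      using zero_le_power2[of "x (r - \<tau>) - (1 + s) / 2"] by linarith
    then have "c * (x (r - \<tau>) * (1 + s - x (r - \<tau>))) \<le> c * ((1 + s)\<^sup>2 / 4)"
      using c_pos by (intro mult_left_mono) auto
    then have "c * (x (r - \<tau>) * (1 + s - x (r - \<tau>))) \<le> C" unfolding C_def by simp
    then show "c * (x (r - \<tau>) * (1 - x (r - \<tau>) - y (r - \<tau>)))
        + (c * x (r - \<tau>) * y (r - \<tau>) - s * y r) \<le> - s * U r + C"
      unfolding U_def by (simp add: algebra_simps)
  qed
  have "((\<lambda>t. C / s + exp (- s * (t - \<tau>)) * (U \<tau> - C / s)) \<longlongrightarrow> C / s + 0) at_top"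
    by (intro tendsto_add tendsto_const tendsto_mult_left_zero tendsto_exp_neg_at_top s_pos)
  then have "\<forall>\<^sub>F t in at_top. C / s + exp (- s * (t - \<tau>)) * (U \<tau> - C / s) < y_bound"
    unfolding y_bound_def C_def by (rule order_tendstoD) simp
  then show ?thesis using eventually_ge_at_top[of \<tau>]
  proof eventually_elim
    case (elim t)
    then have "y t \<le> U t" unfolding U_def using x_nonneg[of "t - \<tau>"] c_pos tau_nonneg by simp
    then show ?case using U_le[of t] elim by simp
  qed
qed

lemma eventually_y_pos:
  assumes "- \<tau> \<le> \<theta>" "\<theta> \<le> 0" "0 < x \<theta> * y \<theta>"
  shows "\<forall>\<^sub>F t in at_top. 0 < y t"
proof -
  define r0 where "r0 = \<theta> + \<tau>"
  have "0 \<le> r0" using assms unfolding r0_def by simp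
  obtain t0 where "0 \<le> t0" "0 < y t0"
  proof (cases "0 < y r0")
    case False
    then have "y r0 = 0" using y_nonneg[of r0] \<open>0 \<le> r0\<close> tau_nonneg by simp
    moreover have "0 < c * x (r0 - \<tau>) * y (r0 - \<tau>) - s * y r0"
      using assms c_pos \<open>y r0 = 0\<close> unfolding r0_def by (simp add: mult.assoc)
    ultimately obtain d where "0 < d" "\<forall>h>0. r0 + h \<in> {0..} \<longrightarrow> h < d \<longrightarrow> 0 < y (r0 + h)"
      using has_real_derivative_pos_inc_right[OF y_deriv_within[OF \<open>0 \<le> r0\<close>]] by auto
    then show ?thesis using that[of "r0 + d / 2"] \<open>0 \<le> r0\<close> by simp
  qed (use \<open>0 \<le> r0\<close> in blast)
  then show ?thesis using y_pos_after by (auto simp: eventually_at_top_linorder)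
qed

lemma inv_x_le_of_y_le:
  assumes "0 \<le> a" "a \<le> t" "0 < \<eta>" "\<eta> < 1" "\<forall>r\<in>{a..t}. y r \<le> \<eta>"
  shows "1 / x t \<le> 1 / (1 - \<eta>) + exp (- (1 - \<eta>) * (t - a)) / x a"
proof -
  have "1 / x t \<le> 1 / (1 - \<eta>) + exp (- (1 - \<eta>) * (t - a)) * (1 / x a - 1 / (1 - \<eta>))"
  proof (rule affine_upper_bound_by_deriv[OF assms(2) continuous_on_inv_x[OF assms(1)],
        where f' = "\<lambda>r. - 1 / x r + 1 + y r / x r"])
    fix r assume r: "a < r" "r < t"
    then show "((\<lambda>r. 1 / x r) has_real_derivative - 1 / x r + 1 + y r / x r) (at r)"
      using inv_x_deriv assms(1) by simp
    have "y r / x r \<le> \<eta> / x r" using assms(1,5) r x_pos[of r] by (simp add: divide_right_mono)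
    moreover have "- (1 - \<eta>) * (1 / x r) = - 1 / x r + \<eta> / x r"
      using x_pos[of r] r assms(1) by (simp add: field_simps)
    ultimately show "- 1 / x r + 1 + y r / x r \<le> - (1 - \<eta>) * (1 / x r) + 1" by linarith
  qed (use assms in auto)
  moreover have "0 \<le> exp (- (1 - \<eta>) * (t - a)) * (1 / (1 - \<eta>))" using assms by simp
  ultimately show ?thesis by (simp add: algebra_simps)
qed

end

section \<open>Extinction of the predator\<close>

context delay_solution
begin

lemma y_decay_while_x_small:
  assumes "0 < q" "q < s" "0 \<le> a" "\<forall>r\<ge>a. y r \<le> y_bound" "\<forall>r\<in>{a..t}. c * x r \<le> q"
    and "r \<in> {a..t}"
  shows "y r < 2 * y_bound * exp (- decay_rate s q \<tau> * (r - a - \<tau>))"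
proof -
  have "\<forall>r\<in>{a..t}. y r < 2 * y_bound * exp (- decay_rate s q \<tau> * (r - a - \<tau>))"
  proof (rule delay_decay[OF assms(1,2) tau_nonneg,
        where y' = "\<lambda>r. c * x (r - \<tau>) * y (r - \<tau>) - s * y r"])
    fix r' assume r': "a + \<tau> < r'" "r' \<le> t"
    then show "(y has_real_derivative c * x (r' - \<tau>) * y (r' - \<tau>) - s * y r') (at r')"
      using y_deriv assms(3) tau_nonneg by simp
    have "r' - \<tau> \<in> {a..t}" using r' tau_nonneg by simp
    then have "c * x (r' - \<tau>) * y (r' - \<tau>) \<le> q * y (r' - \<tau>)"
      using bspec[OF assms(5)] y_nonneg[of "r' - \<tau>"] assms(3) tau_nonneg
      by (intro mult_right_mono) auto
    then show "c * x (r' - \<tau>) * y (r' - \<tau>) - s * y r' \<le> - s * y r' + q * y (r' - \<tau>)" by simp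
  qed (use assms tau_nonneg y_bound_ge_1 in \<open>auto intro: continuous_on_y\<close>)
  then show ?thesis using assms(6) by blast
qed

lemma tendsto_y_0:
  assumes "c < s"
  shows "(y \<longlongrightarrow> 0) at_top"
proof -
  define q where "q = (s + c) / 2"
  have "0 < q" "q < s" "0 < (s - c) / (2 * c)" unfolding q_def using assms c_pos by auto
  have "\<forall>\<^sub>F t in at_top. c * x t \<le> q \<and> y t \<le> y_bound \<and> 0 \<le> t"
    using eventually_x_less[OF \<open>0 < (s - c) / (2 * c)\<close>] eventually_y_le_bound
      eventually_ge_at_top[of 0]
  proof eventually_elim
    case (elim t)
    then have "c * x t \<le> c * (1 + (s - c) / (2 * c))" using c_pos by (intro mult_left_mono) auto
    then show ?case using elim c_pos unfolding q_def by (simp add: field_simps)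
  qed
  then obtain T where T: "\<forall>t\<ge>T. c * x t \<le> q \<and> y t \<le> y_bound \<and> 0 \<le> t"
    by (auto simp: eventually_at_top_linorder)
  define m where "m = decay_rate s q \<tau>"
  have "0 < m" unfolding m_def using decay_rate_margin \<open>0 < q\<close> \<open>q < s\<close> tau_nonneg by blast
  show ?thesis
  proof (rule tendsto_sandwich)
    show "\<forall>\<^sub>F t in at_top. 0 \<le> y t"
      using eventually_ge_at_top[of 0] by eventually_elim (use y_nonneg tau_nonneg in simp)
    show "\<forall>\<^sub>F t in at_top. y t \<le> 2 * y_bound * exp (- m * (t - (T + \<tau>)))"
      using eventually_ge_at_top[of T]
    proof eventually_elim
      case (elim t)
      then show ?case
        using y_decay_while_x_small[OF \<open>0 < q\<close> \<open>q < s\<close>, of T t t] T unfolding m_def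
        by (simp add: algebra_simps)
    qed
    show "((\<lambda>t. 2 * y_bound * exp (- m * (t - (T + \<tau>)))) \<longlongrightarrow> 0) at_top"
      by (intro tendsto_mult_right_zero tendsto_exp_neg_at_top \<open>0 < m\<close>)
  qed simp
qed

lemma tendsto_x_1:
  assumes "(y \<longlongrightarrow> 0) at_top"
  shows "(x \<longlongrightarrow> 1) at_top"
proof (rule order_tendstoI)
  fix a :: real assume "1 < a"
  then show "\<forall>\<^sub>F t in at_top. x t < a"
    using eventually_x_less[of "a - 1"] by simp
next
  fix a :: real assume "a < 1"
  define \<eta> where "\<eta> = min (1 / 2) ((1 - a) / 4)"
  have "\<eta> \<le> (1 - a) / 4" unfolding \<eta>_def by (rule min.cobounded2)
  then have \<eta>: "0 < \<eta>" "\<eta> \<le> 1 / 2" "3 * \<eta> < 1 - a" using \<open>a < 1\<close> unfolding \<eta>_def by auto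
  have "\<forall>\<^sub>F t in at_top. y t < \<eta> \<and> 0 \<le> t"
    using order_tendstoD(2)[OF assms \<open>0 < \<eta>\<close>] eventually_ge_at_top by (rule eventually_conj)
  then obtain t0 where t0: "0 \<le> t0" "\<And>t. t0 \<le> t \<Longrightarrow> y t < \<eta>"
    unfolding eventually_at_top_linorder by auto
  have "((\<lambda>t. exp (- (1 - \<eta>) * (t - t0)) / x t0) \<longlongrightarrow> 0) at_top"
    using \<eta> by (intro tendsto_divide_zero tendsto_exp_neg_at_top) simp
  then have "\<forall>\<^sub>F t in at_top. exp (- (1 - \<eta>) * (t - t0)) / x t0 < \<eta> \<and> t0 \<le> t"
    using \<open>0 < \<eta>\<close> by (intro eventually_conj order_tendstoD(2) eventually_ge_at_top) simp_all
  then show "\<forall>\<^sub>F t in at_top. a < x t"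
  proof eventually_elim
    case (elim t)
    have "1 / x t \<le> 1 / (1 - \<eta>) + exp (- (1 - \<eta>) * (t - t0)) / x t0"
      using t0 elim \<eta> by (intro inv_x_le_of_y_le) (auto simp: less_imp_le)
    moreover have "1 / (1 - \<eta>) \<le> 1 + 2 * \<eta>"
      using \<eta> by (simp add: field_simps)
    ultimately have "1 / x t \<le> 1 + 3 * \<eta>" using elim by linarith
    then have "1 / (1 + 3 * \<eta>) \<le> x t" using x_pos[of t] t0 elim \<eta> by (simp add: field_simps)
    moreover have "1 - 3 * \<eta> \<le> 1 / (1 + 3 * \<eta>)" using \<eta> by (simp add: field_simps)
    ultimately show "a < x t" using \<eta> by linarith
  qed
qed

end

section \<open>Uniform persistence\<close>

context delay_system
begin

text \<open>The thresholds and floors depend on \<open>s\<close>, \<open>c\<close> and \<open>\<tau>\<close> only, which makes the persistence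
  uniform in the initial data.\<close>
definition x_threshold :: real where
  "x_threshold = s / (2 * c)"

definition x_recovery_time :: real where
  "x_recovery_time = 8 * y_bound / decay_rate s (s / 2) \<tau>"

definition x_floor :: real where
  "x_floor = x_threshold * exp (- y_bound * (\<tau> + x_recovery_time))"

lemma x_threshold_pos: "0 < x_threshold"
  unfolding x_threshold_def using s_pos c_pos by simp

lemma x_threshold_less: "s < c \<Longrightarrow> x_threshold < 1 / 2"
  unfolding x_threshold_def using s_pos c_pos by (simp add: field_simps)

lemma x_recovery_time_pos: "0 < x_recovery_time"
  unfolding x_recovery_time_def using decay_rate_margin(1)[of "s / 2" s \<tau>] s_pos tau_nonneg y_bound_ge_1
  by simp

lemma x_floor_pos: "0 < x_floor"
  unfolding x_floor_def using x_threshold_pos by simp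

lemma x_floor_le_threshold: "x_floor \<le> x_threshold"
  unfolding x_floor_def using x_threshold_pos x_recovery_time_pos tau_nonneg y_bound_ge_1
  by (simp add: mult_left_le)

definition x_target :: real where
  "x_target = (1 + s / c) / 2"

definition y_threshold :: real where
  "y_threshold = (1 - s / c) / 4"

definition y_recovery_time :: real where
  "y_recovery_time = 2 / (x_floor * (1 / x_target - 1 / (1 - y_threshold)))"

definition y_floor :: real where
  "y_floor = y_threshold * exp (- s * (y_recovery_time + \<tau>)) / 2"

lemma y_threshold_bounds: "s < c \<Longrightarrow> 0 < y_threshold \<and> y_threshold \<le> 1 / 4"
  unfolding y_threshold_def using s_pos c_pos by simp

lemma x_target_bounds: "s < c \<Longrightarrow> s / c < x_target \<and> x_target < 1 - y_threshold"
  unfolding x_target_def y_threshold_def using s_pos c_pos by (simp add: field_simps)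

lemma y_recovery_time_pos:
  assumes "s < c"
  shows "0 < y_recovery_time"
proof -
  have "0 < x_target" using x_target_bounds[OF assms] s_pos c_pos by (smt (verit) divide_pos_pos)
  then have "1 / (1 - y_threshold) < 1 / x_target"
    using x_target_bounds[OF assms] by (simp add: frac_less2)
  then show ?thesis unfolding y_recovery_time_def using x_floor_pos by simp
qed

lemma y_floor_pos: "s < c \<Longrightarrow> 0 < y_floor"
  unfolding y_floor_def using y_threshold_bounds by simp

lemma y_floor_le_threshold:
  assumes "s < c"
  shows "y_floor \<le> y_threshold"
proof -
  have "0 \<le> s * (y_recovery_time + \<tau>)" using y_recovery_time_pos[OF assms] s_pos tau_nonneg by simp
  then have "y_threshold * exp (- s * (y_recovery_time + \<tau>)) \<le> y_threshold"
    using y_threshold_bounds[OF assms] by (intro mult_left_le) auto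
  then show ?thesis unfolding y_floor_def using y_threshold_bounds[OF assms] by linarith
qed

end

context delay_solution
begin

lemma y_small_while_x_small:
  assumes "0 \<le> a" "\<forall>r\<ge>a. y r \<le> y_bound" "\<forall>r\<in>{a..t}. x r \<le> x_threshold"
    and "a + \<tau> + x_recovery_time \<le> r" "r \<le> t"
  shows "y r < 1 / 4"
proof -
  define m where "m = decay_rate s (s / 2) \<tau>"
  have "0 < m" using decay_rate_margin(1)[of "s / 2" s \<tau>] s_pos tau_nonneg unfolding m_def by simp
  have "\<forall>r\<in>{a..t}. c * x r \<le> s / 2"
    using assms(3) c_pos unfolding x_threshold_def by (auto simp: field_simps)
  moreover have "r \<in> {a..t}" using assms(4,5) tau_nonneg x_recovery_time_pos by simp
  ultimately have "y r < 2 * y_bound * exp (- m * (r - a - \<tau>))"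
    using y_decay_while_x_small[OF _ _ assms(1,2)] s_pos unfolding m_def by simp
  also have "\<dots> \<le> 2 * y_bound * exp (- m * x_recovery_time)"
    using assms(4) \<open>0 < m\<close> y_bound_ge_1 by (simp add: mult_left_mono)
  also have "\<dots> = 2 * y_bound * exp (- (8 * y_bound))"
    unfolding x_recovery_time_def m_def[symmetric] using \<open>0 < m\<close> by simp
  also have "\<dots> \<le> 2 * y_bound * (1 / (8 * y_bound))"
    using exp_neg_le_inverse[of "8 * y_bound"] y_bound_ge_1 by (intro mult_left_mono) auto
  also have "\<dots> = 1 / 4" using y_bound_ge_1 by simp
  finally show ?thesis .
qed

lemma x_grows_while_small:
  assumes "s < c" "0 \<le> a" "\<forall>r\<ge>a. y r \<le> y_bound" "\<forall>r\<in>{a..t}. x r \<le> x_threshold"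
    and "a + \<tau> + x_recovery_time \<le> t"
  shows "exp ((t - (a + \<tau> + x_recovery_time)) / 4) * x (a + \<tau> + x_recovery_time) \<le> x t"
proof -
  define a' where "a' = a + \<tau> + x_recovery_time"
  have "0 < a'" unfolding a'_def using assms(2) tau_nonneg x_recovery_time_pos by simp
  have "exp (- (- 1 / 4) * (t - a')) * x a' \<le> x t"
  proof (rule exp_lower_bound_by_deriv[where f' = "\<lambda>r. x r * (1 - x r - y r)"])
    show "a' \<le> t" "continuous_on {a'..t} x"
      using assms(5) \<open>0 < a'\<close> tau_nonneg unfolding a'_def by (auto intro: continuous_on_x)
    fix r assume r: "a' < r" "r < t"
    then show "(x has_real_derivative x r * (1 - x r - y r)) (at r)" using x_deriv \<open>0 < a'\<close> by simp
    have "r \<in> {a..t}" using r tau_nonneg x_recovery_time_pos unfolding a'_def by simp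
    then have "x r < 1 / 2" using bspec[OF assms(4)] x_threshold_less[OF assms(1)] by fastforce
    moreover have "y r < 1 / 4"
      using y_small_while_x_small[OF assms(2-4), of r] r unfolding a'_def by simp
    ultimately have "x r * (1 / 4) \<le> x r * (1 - x r - y r)"
      using x_pos[of r] r \<open>0 < a'\<close> by (intro mult_left_mono) auto
    then show "- (- 1 / 4) * x r \<le> x r * (1 - x r - y r)" by simp
  qed
  then show ?thesis unfolding a'_def by (simp add: field_simps)
qed

lemma x_ge_exp_decay:
  assumes "0 \<le> a" "a \<le> t" "\<forall>r\<in>{a..t}. x r \<le> 1 \<and> y r \<le> y_bound"
  shows "exp (- y_bound * (t - a)) * x a \<le> x t"
proof (rule exp_lower_bound_by_deriv[where f' = "\<lambda>r. x r * (1 - x r - y r)"])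
  fix r assume r: "a < r" "r < t"
  then show "(x has_real_derivative x r * (1 - x r - y r)) (at r)" using x_deriv assms(1) by simp
  have "x r \<le> 1" "y r \<le> y_bound" "0 \<le> x r" using bspec[OF assms(3), of r] x_nonneg[of r] r assms(1)
    tau_nonneg by auto
  then have "x r * (- y_bound) \<le> x r * (1 - x r - y r)" by (intro mult_left_mono) auto
  then show "- y_bound * x r \<le> x r * (1 - x r - y r)" by (simp add: mult.commute)
qed (use assms tau_nonneg in \<open>auto intro: continuous_on_x\<close>)

lemma x_reaches_threshold:
  assumes "s < c" "0 \<le> T" "\<forall>r\<ge>T. y r \<le> y_bound"
  shows "\<exists>t0\<ge>T. x_threshold \<le> x t0"
proof (rule ccontr)
  assume "\<not> ?thesis"
  then have small: "\<forall>t\<ge>T. x t \<le> x_threshold" by force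
  define a0 where "a0 = T + \<tau> + x_recovery_time"
  have "T \<le> a0" unfolding a0_def using tau_nonneg x_recovery_time_pos by simp
  then have "0 < x a0" using x_pos assms(2) by simp
  define t where "t = a0 + 4 * x_threshold / x a0"
  have "a0 \<le> t" unfolding t_def using \<open>0 < x a0\<close> x_threshold_pos by simp
  have "exp ((t - a0) / 4) * x a0 \<le> x t"
    using x_grows_while_small[OF assms, of t] small \<open>a0 \<le> t\<close> unfolding a0_def by simp
  moreover have "(1 + x_threshold / x a0) * x a0 \<le> exp ((t - a0) / 4) * x a0"
    using exp_ge_add_one_self[of "x_threshold / x a0"] \<open>0 < x a0\<close>
    unfolding t_def by (intro mult_right_mono) auto
  moreover have "(1 + x_threshold / x a0) * x a0 = x a0 + x_threshold"
    using \<open>0 < x a0\<close> by (simp add: field_simps)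
  moreover have "x t \<le> x_threshold" using small \<open>T \<le> a0\<close> \<open>a0 \<le> t\<close> by simp
  ultimately show False using \<open>0 < x a0\<close> by linarith
qed

text \<open>An excursion of \<open>x\<close> below its threshold lasts at most \<open>\<tau> + x_recovery_time\<close> before
  \<open>x\<close> increases again, and during that time \<open>x\<close> decays at most at rate \<open>y_bound\<close>.\<close>
lemma x_floor_le_on_excursion:
  assumes "s < c" "0 \<le> a" "\<forall>r\<ge>a. y r \<le> y_bound" "x a = x_threshold" "a \<le> t"
    and below: "\<forall>r\<in>{a..t}. x r \<le> x_threshold"
  shows "x_floor \<le> x t"
proof -
  define L where "L = \<tau> + x_recovery_time"
  have "0 < L" unfolding L_def using tau_nonneg x_recovery_time_pos by simp
  have early: "x_floor \<le> x r" if "a \<le> r" "r \<le> t" "r \<le> a + L" for r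
  proof -
    have "\<forall>r'\<in>{a..r}. x r' \<le> 1 \<and> y r' \<le> y_bound"
    proof
      fix r' assume r': "r' \<in> {a..r}"
      then have "r' \<in> {a..t}" using that by simp
      then show "x r' \<le> 1 \<and> y r' \<le> y_bound"
        using bspec[OF below] assms(3) r' x_threshold_less[OF assms(1)] by fastforce
    qed
    then have "exp (- y_bound * (r - a)) * x_threshold \<le> x r"
      using x_ge_exp_decay[OF assms(2) that(1)] assms(4) by simp
    moreover have "exp (- y_bound * L) * x_threshold \<le> exp (- y_bound * (r - a)) * x_threshold"
      using that y_bound_ge_1 x_threshold_pos by (intro mult_right_mono) (auto simp: mult_left_mono)
    moreover have "x_floor = exp (- y_bound * L) * x_threshold" unfolding x_floor_def L_def by simp
    ultimately show ?thesis by linarith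
  qed
  show ?thesis
  proof (cases "t \<le> a + L")
    case False
    have "exp ((t - (a + L)) / 4) * x (a + L) \<le> x t"
      using x_grows_while_small[OF assms(1-3) below] False unfolding L_def by (simp add: add.assoc)
    moreover have "x (a + L) \<le> exp ((t - (a + L)) / 4) * x (a + L)"
      using False x_pos[of "a + L"] assms(2) \<open>0 < L\<close> by simp
    ultimately show ?thesis using early[of "a + L"] False \<open>0 < L\<close> by simp
  qed (use early assms(5) in simp)
qed

lemma x_persistent:
  assumes "s < c"
  shows "\<forall>\<^sub>F t in at_top. x_floor \<le> x t"
proof -
  obtain T where T: "0 \<le> T" "\<forall>r\<ge>T. y r \<le> y_bound"
    using eventually_conj[OF eventually_y_le_bound eventually_ge_at_top[of 0]]
    unfolding eventually_at_top_linorder by auto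
  then obtain t0 where t0: "T \<le> t0" "x_threshold \<le> x t0" using x_reaches_threshold[OF assms] by blast
  have "\<forall>t\<ge>t0. x_floor \<le> x t"
  proof (rule ge_after_excursions[where f = x, OF _ x_floor_le_threshold t0(2)])
    show "continuous_on {t0..} x"
      using t0 T tau_nonneg by (intro continuous_on_subset[OF continuous_x]) auto
    fix a t assume a: "t0 \<le> a" "a \<le> t" "x a = x_threshold" "\<forall>r\<in>{a..t}. x r \<le> x_threshold"
    have "0 \<le> a" "\<forall>r\<ge>a. y r \<le> y_bound" using a(1) t0(1) T by auto
    then show "x_floor \<le> x t" using x_floor_le_on_excursion[OF assms _ _ a(3,2,4)] by blast
  qed
  then show ?thesis by (auto simp: eventually_at_top_linorder)
qed

lemma x_large_while_y_small:
  assumes "s < c" "0 \<le> a" "\<forall>r\<ge>a. x_floor \<le> x r" "\<forall>r\<in>{a..t}. y r \<le> y_threshold"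
    and "a + y_recovery_time \<le> t"
  shows "x_target \<le> x t"
proof -
  define \<eta> where "\<eta> = y_threshold"
  define g where "g = 1 / x_target - 1 / (1 - \<eta>)"
  have \<eta>: "0 < \<eta>" "\<eta> \<le> 1 / 4" using y_threshold_bounds[OF assms(1)] unfolding \<eta>_def by auto
  have "0 < y_recovery_time" by (rule y_recovery_time_pos[OF assms(1)])
  then have "0 < g" unfolding y_recovery_time_def g_def \<eta>_def using x_floor_pos
    by (simp add: zero_less_divide_iff zero_less_mult_iff)
  have inv_x: "1 / x t \<le> 1 / (1 - \<eta>) + exp (- (1 - \<eta>) * (t - a)) / x a"
    using assms \<eta> \<open>0 < y_recovery_time\<close> unfolding \<eta>_def by (intro inv_x_le_of_y_le) auto
  have "exp (- (1 - \<eta>) * (t - a)) \<le> exp (- (y_recovery_time / 2))"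
  proof -
    have "1 / 2 * (t - a) \<le> (1 - \<eta>) * (t - a)"
      using assms(5) \<eta> \<open>0 < y_recovery_time\<close> by (intro mult_right_mono) auto
    moreover have "y_recovery_time / 2 \<le> 1 / 2 * (t - a)" using assms(5) by simp
    ultimately have "y_recovery_time / 2 \<le> (1 - \<eta>) * (t - a)" by linarith
    then show ?thesis by (simp only: mult_minus_left exp_le_cancel_iff neg_le_iff_le)
  qed
  also have "exp (- (y_recovery_time / 2)) \<le> x_floor * g"
    using exp_neg_le_inverse[of "y_recovery_time / 2"] \<open>0 < y_recovery_time\<close>
    unfolding y_recovery_time_def g_def \<eta>_def by simp
  finally have "exp (- (1 - \<eta>) * (t - a)) / x a \<le> x_floor * g / x a"
    using x_pos[of a] assms(2) by (intro divide_right_mono) auto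
  also have "\<dots> \<le> x_floor * g / x_floor"
    using assms(3) x_floor_pos \<open>0 < g\<close> by (intro divide_left_mono) auto
  also have "\<dots> = g" using x_floor_pos by simp
  finally have "1 / x t \<le> 1 / x_target" using inv_x unfolding g_def by simp
  moreover have "0 < x t" using x_pos[of t] assms(2,5) \<open>0 < y_recovery_time\<close> by simp
  moreover have "0 < x_target" using x_target_bounds[OF assms(1)] s_pos c_pos
    by (metis divide_pos_pos order.strict_trans)
  ultimately show ?thesis by (simp add: field_simps)
qed

lemma y_grows_while_small:
  assumes "s < c" "0 \<le> a" "\<forall>r\<ge>a. x_floor \<le> x r" "\<forall>r\<in>{a..t}. y r \<le> y_threshold"
    and "a + y_recovery_time + \<tau> \<le> t" "0 < m"
    and "\<forall>r\<in>{a + y_recovery_time..a + y_recovery_time + \<tau>}. m < y r"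
  shows "m * exp (growth_rate s (c * x_target / s) \<tau> * (t - (a + y_recovery_time + \<tau>))) < y t"
proof -
  define a' where "a' = a + y_recovery_time + \<tau>"
  define q where "q = c * x_target / s"
  have "0 < y_recovery_time" by (rule y_recovery_time_pos[OF assms(1)])
  have "1 < q" unfolding q_def using x_target_bounds[OF assms(1)] s_pos c_pos by (simp add: field_simps)
  have "\<forall>r\<in>{a'..t}. m * exp (growth_rate s q \<tau> * (r - a')) < y r"
  proof (rule delay_growth[OF s_pos \<open>1 < q\<close> tau_nonneg \<open>0 < m\<close>,
        where y' = "\<lambda>r. c * x (r - \<tau>) * y (r - \<tau>) - s * y r"])
    show "a' \<le> t" "continuous_on {a'..t} y"
      using assms(2,5) \<open>0 < y_recovery_time\<close> tau_nonneg unfolding a'_def by (auto intro: continuous_on_y)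
    fix r
    show "a' - \<tau> \<le> r \<Longrightarrow> r \<le> a' \<Longrightarrow> m < y r" using assms(7) unfolding a'_def by simp
    assume r: "a' < r" "r \<le> t"
    then show "(y has_real_derivative c * x (r - \<tau>) * y (r - \<tau>) - s * y r) (at r)"
      using y_deriv assms(2) \<open>0 < y_recovery_time\<close> tau_nonneg unfolding a'_def by simp
    have "{a..r - \<tau>} \<subseteq> {a..t}" using r tau_nonneg by auto
    then have "\<forall>r'\<in>{a..r - \<tau>}. y r' \<le> y_threshold" using assms(4) by blast
    then have "x_target \<le> x (r - \<tau>)"
      using x_large_while_y_small[OF assms(1-3)] r unfolding a'_def by simp
    then have "s * q * y (r - \<tau>) \<le> c * x (r - \<tau>) * y (r - \<tau>)"
      unfolding q_def using s_pos c_pos y_nonneg[of "r - \<tau>"] r assms(2) \<open>0 < y_recovery_time\<close> tau_nonneg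
      unfolding a'_def by (intro mult_right_mono) auto
    then show "- s * y r + s * q * y (r - \<tau>) \<le> c * x (r - \<tau>) * y (r - \<tau>) - s * y r" by simp
  qed
  moreover have "t \<in> {a'..t}" using assms(5) unfolding a'_def by simp
  ultimately show ?thesis unfolding a'_def q_def by blast
qed

lemma y_ge_exp_decay_uniform:
  assumes "0 \<le> a" "a \<le> r" "r \<le> a + L"
  shows "exp (- s * L) * y a \<le> y r"
proof -
  have "exp (- s * L) * y a \<le> exp (- s * (r - a)) * y a"
    using assms s_pos y_nonneg[of a] tau_nonneg by (intro mult_right_mono) auto
  then show ?thesis using y_ge_exp_decay[OF assms(1,2)] by linarith
qed

lemma growth_rate_y_pos: "s < c \<Longrightarrow> 0 < growth_rate s (c * x_target / s) \<tau>"
  using growth_rate_margin(1)[OF s_pos _ tau_nonneg] x_target_bounds s_pos c_pos by (simp add: field_simps)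

lemma y_reaches_threshold:
  assumes "s < c" "0 \<le> T" "\<forall>r\<ge>T. x_floor \<le> x r" "0 < y T"
  shows "\<exists>t0\<ge>T. y_threshold \<le> y t0"
proof (rule ccontr)
  assume "\<not> ?thesis"
  then have small: "\<forall>t\<ge>T. y t \<le> y_threshold" by force
  define L where "L = y_recovery_time + \<tau>"
  define n where "n = growth_rate s (c * x_target / s) \<tau>"
  define m where "m = exp (- s * L) * y T / 2"
  have "0 < n" "0 < m" "0 < y_recovery_time"
    using growth_rate_y_pos y_recovery_time_pos assms(1,4) unfolding n_def m_def by simp_all
  define t where "t = T + L + y_threshold / (m * n)"
  have "T + L \<le> t" unfolding t_def using \<open>0 < m\<close> \<open>0 < n\<close> y_threshold_bounds[OF assms(1)] by simp
  have "\<forall>r\<in>{T + y_recovery_time..T + y_recovery_time + \<tau>}. m < y r"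
  proof
    fix r assume "r \<in> {T + y_recovery_time..T + y_recovery_time + \<tau>}"
    then have "2 * m \<le> y r"
      using y_ge_exp_decay_uniform[of T r L] assms(2) \<open>0 < y_recovery_time\<close> unfolding m_def L_def by simp
    then show "m < y r" using \<open>0 < m\<close> by simp
  qed
  then have "m * exp (n * (t - (T + L))) < y t"
    using y_grows_while_small[OF assms(1-3), of t m] small \<open>T + L \<le> t\<close> \<open>0 < m\<close>
    unfolding n_def L_def by (simp add: add.assoc)
  moreover have "m * (1 + y_threshold / m) \<le> m * exp (n * (t - (T + L)))"
    using exp_ge_add_one_self[of "y_threshold / m"] \<open>0 < m\<close> \<open>0 < n\<close>
    unfolding t_def by (intro mult_left_mono) auto
  moreover have "y t \<le> y_threshold" using small \<open>T + L \<le> t\<close> \<open>0 < y_recovery_time\<close> tau_nonneg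
    unfolding L_def by simp
  moreover have "m * (1 + y_threshold / m) = m + y_threshold" using \<open>0 < m\<close> by (simp add: field_simps)
  ultimately show False using \<open>0 < m\<close> by linarith
qed

text \<open>During the first \<open>y_recovery_time + \<tau>\<close> of an excursion below the threshold \<open>y\<close> decays at
  most at rate \<open>s\<close>; afterwards \<open>x \<ge> x_target\<close> drives it up again.\<close>
lemma y_floor_le_on_excursion:
  assumes "s < c" "0 \<le> a" "\<forall>r\<ge>a. x_floor \<le> x r" "y a = y_threshold" "a \<le> t"
    and below: "\<forall>r\<in>{a..t}. y r \<le> y_threshold"
  shows "y_floor \<le> y t"
proof -
  define L where "L = y_recovery_time + \<tau>"
  have "0 < y_recovery_time" "0 < y_floor" using y_recovery_time_pos y_floor_pos assms(1) by auto
  have early: "2 * y_floor \<le> y r" if "a \<le> r" "r \<le> a + L" for r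
    using y_ge_exp_decay_uniform[OF assms(2) that] assms(4) unfolding y_floor_def L_def
    by (simp add: mult.commute)
  show ?thesis
  proof (cases "t \<le> a + L")
    case False
    have "\<forall>r\<in>{a + y_recovery_time..a + y_recovery_time + \<tau>}. y_floor < y r"
    proof
      fix r assume "r \<in> {a + y_recovery_time..a + y_recovery_time + \<tau>}"
      then have "2 * y_floor \<le> y r" using early \<open>0 < y_recovery_time\<close> unfolding L_def by simp
      then show "y_floor < y r" using \<open>0 < y_floor\<close> by simp
    qed
    then have "y_floor * exp (growth_rate s (c * x_target / s) \<tau> * (t - (a + L))) < y t"
      using y_grows_while_small[OF assms(1-3) below] False \<open>0 < y_floor\<close>
      unfolding L_def by (simp add: add.assoc)
    moreover have "y_floor \<le> y_floor * exp (growth_rate s (c * x_target / s) \<tau> * (t - (a + L)))"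
      using False growth_rate_y_pos[OF assms(1)] \<open>0 < y_floor\<close> by simp
    ultimately show ?thesis by simp
  qed (use early assms(5) \<open>0 < y_floor\<close> in fastforce)
qed

lemma y_persistent:
  assumes "s < c" "\<forall>\<^sub>F t in at_top. 0 < y t"
  shows "\<forall>\<^sub>F t in at_top. y_floor \<le> y t"
proof -
  obtain T where T: "0 \<le> T" "\<forall>r\<ge>T. x_floor \<le> x r" "\<forall>r\<ge>T. 0 < y r"
    using eventually_conj[OF x_persistent[OF assms(1)]
        eventually_conj[OF assms(2) eventually_ge_at_top[of 0]]]
    unfolding eventually_at_top_linorder by auto
  then obtain t0 where t0: "T \<le> t0" "y_threshold \<le> y t0"
    using y_reaches_threshold[OF assms(1)] by blast
  have "\<forall>t\<ge>t0. y_floor \<le> y t"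
  proof (rule ge_after_excursions[where f = y, OF _ y_floor_le_threshold[OF assms(1)] t0(2)])
    show "continuous_on {t0..} y"
      using t0 T tau_nonneg by (intro continuous_on_subset[OF continuous_y]) auto
    fix a t assume a: "t0 \<le> a" "a \<le> t" "y a = y_threshold" "\<forall>r\<in>{a..t}. y r \<le> y_threshold"
    have "0 \<le> a" "\<forall>r\<ge>a. x_floor \<le> x r" using a(1) t0(1) T by auto
    then show "y_floor \<le> y t" using y_floor_le_on_excursion[OF assms(1) _ _ a(3,2,4)] by blast
  qed
  then show ?thesis by (auto simp: eventually_at_top_linorder)
qed

end

section \<open>Convergence to the coexistence equilibrium without delay\<close>

context delay_solution
begin

lemma eventually_x_le_2_y_le_bound: "\<forall>\<^sub>F t in at_top. 1 \<le> t \<and> x t \<le> 2 \<and> y t \<le> y_bound"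
  using eventually_x_less[OF zero_less_one] eventually_ge_at_top[of 1] eventually_y_le_bound
  by eventually_elim simp

lemma abs_x_deriv_le:
  assumes "0 \<le> t" "x t \<le> 2" "y t \<le> y_bound"
  shows "\<bar>x t * (1 - x t - y t)\<bar> \<le> 2 * (1 + y_bound)"
proof -
  have "0 < x t" "0 \<le> y t" using x_pos y_nonneg assms(1) tau_nonneg by auto
  then have "\<bar>1 - x t - y t\<bar> \<le> 1 + y_bound" using assms by (simp add: abs_le_iff)
  then have "x t * \<bar>1 - x t - y t\<bar> \<le> 2 * (1 + y_bound)"
    using \<open>0 < x t\<close> assms(2) by (intro mult_mono) auto
  then show ?thesis using \<open>0 < x t\<close> by (simp add: abs_mult)
qed

lemma abs_y_deriv_undelayed_le:
  assumes "0 \<le> t" "x t \<le> 2" "y t \<le> y_bound"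
  shows "\<bar>c * x t * y t - s * y t\<bar> \<le> (2 * c + s) * y_bound"
proof -
  have "0 < x t" "0 \<le> y t" using x_pos y_nonneg assms(1) tau_nonneg by auto
  moreover have "c * x t \<le> c * 2" using assms(2) c_pos by (intro mult_left_mono) auto
  moreover have "0 < c * x t" using c_pos \<open>0 < x t\<close> by simp
  ultimately have "\<bar>c * x t - s\<bar> \<le> 2 * c + s"
    unfolding abs_le_iff using s_pos by (intro conjI) linarith+
  then have "\<bar>y t\<bar> * \<bar>c * x t - s\<bar> \<le> y_bound * (2 * c + s)"
    using \<open>0 \<le> y t\<close> assms(3) by (intro mult_mono) auto
  moreover have "\<bar>c * x t * y t - s * y t\<bar> = \<bar>y t\<bar> * \<bar>c * x t - s\<bar>"
    by (simp add: abs_mult[symmetric] algebra_simps)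
  ultimately show ?thesis by (simp add: mult.commute)
qed

text \<open>The Volterra function of the undelayed system, with its minimum at \<open>E\<^sub>+\<close>.\<close>
definition lyapunov :: "real \<Rightarrow> real" where
  "lyapunov t = x t - s / c * ln (x t) + (y t - (1 - s / c) * ln (y t)) / c"

lemma lyapunov_deriv:
  assumes "\<tau> = 0" "0 < t" "0 < y t"
  shows "(lyapunov has_real_derivative - (x t - s / c)\<^sup>2) (at t)"
proof -
  have "0 < x t" using x_pos assms(2) by simp
  have "(lyapunov has_real_derivative (1 - s / c / x t) * (x t * (1 - x t - y t))
      + (1 - (1 - s / c) / y t) * (c * x t * y t - s * y t) / c) (at t)"
    unfolding lyapunov_def using x_deriv[OF assms(2)] y_deriv[OF assms(2)] assms \<open>0 < x t\<close>
    by (auto intro!: derivative_eq_intros simp: field_simps)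
  moreover have "(1 - s / c / x t) * (x t * (1 - x t - y t))
      + (1 - (1 - s / c) / y t) * (c * x t * y t - s * y t) / c = - (x t - s / c)\<^sup>2"
    using \<open>0 < x t\<close> assms(3) c_pos by (simp add: field_simps power2_eq_square)
  ultimately show ?thesis by simp
qed

lemma lyapunov_lower_bound:
  assumes "s < c" "0 \<le> t" "0 < y t"
  shows "s / c - s / c * ln (s / c) + (1 - s / c - (1 - s / c) * ln (1 - s / c)) / c \<le> lyapunov t"
proof -
  have "s / c - s / c * ln (s / c) \<le> x t - s / c * ln (x t)"
    using volterra_ge[OF x_pos[OF assms(2)], of "s / c"] s_pos c_pos by simp
  moreover have "1 - s / c - (1 - s / c) * ln (1 - s / c) \<le> y t - (1 - s / c) * ln (y t)"
    using volterra_ge[OF assms(3), of "1 - s / c"] assms(1) c_pos by simp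
  moreover from this
  have "(1 - s / c - (1 - s / c) * ln (1 - s / c)) / c \<le> (y t - (1 - s / c) * ln (y t)) / c"
    using c_pos by (intro divide_right_mono) auto
  ultimately show ?thesis unfolding lyapunov_def by linarith
qed

lemma tendsto_lyapunov:
  assumes "\<tau> = 0" "s < c" "0 < y 0"
  shows "(lyapunov \<longlongrightarrow> Inf (lyapunov ` {1..})) at_top"
proof -
  have y_pos: "0 < y t" if "0 \<le> t" for t using y_pos_after[of 0 t] that assms(3) by simp
  have decreasing: "lyapunov r \<le> lyapunov t" if "1 \<le> t" "t \<le> r" for t r
  proof (rule DERIV_nonpos_imp_nonincreasing[OF that(2)])
    fix u assume "t \<le> u" "u \<le> r"
    then show "\<exists>d. (lyapunov has_real_derivative d) (at u) \<and> d \<le> 0"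
      using lyapunov_deriv[OF assms(1), of u] y_pos[of u] that by (intro exI[of _ "- (x u - s / c)\<^sup>2"]) simp
  qed
  from lyapunov_lower_bound[OF assms(2)] y_pos have lower: "\<And>t. 1 \<le> t \<Longrightarrow>
      s / c - s / c * ln (s / c) + (1 - s / c - (1 - s / c) * ln (1 - s / c)) / c \<le> lyapunov t"
    by simp
  show ?thesis by (rule tendsto_Inf_of_decreasing[where T = 1, OF decreasing lower])
qed

lemma tendsto_x_Eplus_tau0:
  assumes "\<tau> = 0" "s < c" "0 < y 0"
  shows "(x \<longlongrightarrow> s / c) at_top"
proof -
  have y_pos: "0 < y t" if "0 \<le> t" for t using y_pos_after[of 0 t] that assms(3) by simp
  obtain T where T: "\<forall>t\<ge>T. 1 \<le> t \<and> x t \<le> 2 \<and> y t \<le> y_bound"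
    using eventually_x_le_2_y_le_bound unfolding eventually_at_top_linorder by auto
  have "((\<lambda>t. (x t - s / c)\<^sup>2) \<longlongrightarrow> 0) at_top"
  proof (rule barbalat[where F = "\<lambda>t. - lyapunov t" and T = T and M = "8 * (1 + y_bound)"
        and f' = "\<lambda>t. 2 * (x t - s / c) * (x t * (1 - x t - y t))"])
    show "((\<lambda>t. - lyapunov t) \<longlongrightarrow> - Inf (lyapunov ` {1..})) at_top"
      using tendsto_lyapunov[OF assms] by (rule tendsto_minus)
    fix t assume "T \<le> t"
    then have t: "1 \<le> t" "x t \<le> 2" "y t \<le> y_bound" using T by auto
    show "((\<lambda>t. - lyapunov t) has_real_derivative (x t - s / c)\<^sup>2) (at t)"
      using lyapunov_deriv[OF assms(1), of t] y_pos t by (auto intro!: derivative_eq_intros)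
    show "((\<lambda>t. (x t - s / c)\<^sup>2) has_real_derivative 2 * (x t - s / c) * (x t * (1 - x t - y t))) (at t)"
      using x_deriv[of t] t by (auto intro!: derivative_eq_intros)
    have "0 < s / c" "s / c < 1" using assms(2) s_pos c_pos by simp_all
    then have "\<bar>x t - s / c\<bar> \<le> 2"
      unfolding abs_le_iff using x_pos[of t] t by (intro conjI) linarith+
    then have "\<bar>x t - s / c\<bar> * \<bar>x t * (1 - x t - y t)\<bar> \<le> 2 * (2 * (1 + y_bound))"
      using abs_x_deriv_le[of t] t by (intro mult_mono) auto
    moreover have "\<bar>2 * (x t - s / c) * (x t * (1 - x t - y t))\<bar>
        = 2 * (\<bar>x t - s / c\<bar> * \<bar>x t * (1 - x t - y t)\<bar>)"
      by (simp only: abs_mult abs_numeral mult.assoc)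
    ultimately show "\<bar>2 * (x t - s / c) * (x t * (1 - x t - y t))\<bar> \<le> 8 * (1 + y_bound)"
      by argo
  qed
  from tendsto_real_sqrt[OF this] have "((\<lambda>t. \<bar>x t - s / c\<bar>) \<longlongrightarrow> 0) at_top" by simp
  then show ?thesis by (simp add: tendsto_rabs_zero_iff LIM_zero_cancel)
qed

lemma tendsto_y_Eplus_tau0:
  assumes "\<tau> = 0" "s < c" "0 < y 0"
  shows "(y \<longlongrightarrow> 1 - s / c) at_top"
proof -
  have x_lim: "(x \<longlongrightarrow> s / c) at_top" by (rule tendsto_x_Eplus_tau0[OF assms])
  obtain T where T: "\<forall>t\<ge>T. 1 \<le> t \<and> x t \<le> 2 \<and> y t \<le> y_bound"
    using eventually_x_le_2_y_le_bound unfolding eventually_at_top_linorder by auto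
  have "((\<lambda>t. ln (x t)) \<longlongrightarrow> ln (s / c)) at_top"
    using x_lim s_pos c_pos by (intro tendsto_ln) auto
  then have "((\<lambda>t. 1 - x t - y t) \<longlongrightarrow> 0) at_top"
  proof (rule barbalat[where T = T and M = "2 * (1 + y_bound) + (2 * c + s) * y_bound"
        and f' = "\<lambda>t. - (x t * (1 - x t - y t)) - (c * x t * y t - s * y t)"])
    fix t assume "T \<le> t"
    then have t: "1 \<le> t" "x t \<le> 2" "y t \<le> y_bound" using T by auto
    show "((\<lambda>t. ln (x t)) has_real_derivative 1 - x t - y t) (at t)"
      using x_deriv[of t] x_pos[of t] t by (auto intro!: derivative_eq_intros simp: field_simps)
    show "((\<lambda>t. 1 - x t - y t) has_real_derivative
        - (x t * (1 - x t - y t)) - (c * x t * y t - s * y t)) (at t)"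
      using x_deriv[of t] y_deriv[of t] t assms(1) by (auto intro!: derivative_eq_intros)
    show "\<bar>- (x t * (1 - x t - y t)) - (c * x t * y t - s * y t)\<bar>
        \<le> 2 * (1 + y_bound) + (2 * c + s) * y_bound"
      using abs_x_deriv_le[of t] abs_y_deriv_undelayed_le[of t] t by linarith
  qed
  from tendsto_diff[OF tendsto_diff[OF tendsto_const[of 1] x_lim] this]
  show ?thesis by simp
qed

end

section \<open>Linearised stability and the main theorem\<close>

lemma char_fun_E0: "char_fun s Y \<tau> E0 z = (z - 1) * (z + of_real s)"
  unfolding char_fun_def E0_def Let_def by (simp add: algebra_simps)

lemma char_fun_E1:
  "char_fun s Y \<tau> E1 z = (z + 1) * (z + of_real s - exp (- z * of_real \<tau>) * of_real (Y * exp (- s * \<tau>)))"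
  unfolding char_fun_def E1_def Let_def by (simp add: algebra_simps)

lemma char_fun_Eplus_tau0:
  "Y \<noteq> 0 \<Longrightarrow> char_fun s Y 0 (Eplus s Y 0) z = z * z + of_real (s / Y) * z + of_real (s * (1 - s / Y))"
  unfolding char_fun_def Eplus_def Let_def by (simp add: field_simps)

lemma E0_unstable: "unstable s Y \<tau> E0"
  unfolding unstable_def char_fun_E0 by (intro exI[of _ 1]) simp

text \<open>The root is \<open>w - s\<close>, where \<open>w exp (w \<tau>) = Y\<close> is solved by the intermediate value
  theorem on \<open>[s, Y]\<close>.\<close>
lemma E1_unstable:
  assumes "0 < s" "0 \<le> \<tau>" "s * exp (s * \<tau>) < Y"
  shows "unstable s Y \<tau> E1"
proof -
  define f where "f w = w * exp (w * \<tau>)" for w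
  have "s \<le> s * exp (s * \<tau>)" using assms by simp
  then have "s \<le> Y" using assms(3) by simp
  moreover have "Y \<le> f Y" unfolding f_def using assms \<open>s \<le> Y\<close> by simp
  moreover have "continuous_on {s..Y} f" unfolding f_def by (intro continuous_intros)
  ultimately obtain w where w: "s \<le> w" "w \<le> Y" "f w = Y"
    using IVT'[of f s Y Y] assms(3) unfolding f_def by auto
  then have "s < w" using assms(3) unfolding f_def by (cases "w = s") auto
  have "Y * exp (- w * \<tau>) = w * exp (w * \<tau>) * exp (- w * \<tau>)"
    using w(3) unfolding f_def by simp
  also have "\<dots> = w" by (simp add: mult.assoc exp_minus_inverse)
  finally have "Y * exp (- w * \<tau>) = w" .
  have "exp (- (w - s) * \<tau>) * exp (- s * \<tau>) = exp (- w * \<tau>)"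
    by (simp add: exp_add[symmetric] algebra_simps)
  then have root: "w - exp (- (w - s) * \<tau>) * (Y * exp (- s * \<tau>)) = 0"
    using \<open>Y * exp (- w * \<tau>) = w\<close> by (simp add: mult.left_commute)
  have "exp (- complex_of_real (w - s) * of_real \<tau>) = of_real (exp (- (w - s) * \<tau>))"
    by (simp add: exp_of_real[symmetric])
  then have "char_fun s Y \<tau> E1 (of_real (w - s))
      = (of_real (w - s) + 1) * of_real (w - exp (- (w - s) * \<tau>) * (Y * exp (- s * \<tau>)))"
    unfolding char_fun_E1 by simp
  then have "char_fun s Y \<tau> E1 (of_real (w - s)) = 0" unfolding root by simp
  then show ?thesis unfolding unstable_def using \<open>s < w\<close> by (intro exI[of _ "of_real (w - s)"]) simp
qed

lemma E1_locally_asymp_stable: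
  assumes "0 < Y" "0 \<le> \<tau>" "Y * exp (- s * \<tau>) < s"
  shows "locally_asymp_stable s Y \<tau> E1"
  unfolding locally_asymp_stable_def
proof (intro allI impI)
  fix z assume "char_fun s Y \<tau> E1 z = 0"
  then consider "z = -1" | "z + of_real s = exp (- z * of_real \<tau>) * of_real (Y * exp (- s * \<tau>))"
    unfolding char_fun_E1 by (metis add_eq_0_iff2 eq_iff_diff_eq_0 mult_eq_0_iff)
  then show "Re z < 0"
  proof cases
    case 2
    show ?thesis
    proof (rule ccontr)
      assume "\<not> Re z < 0"
      then have "s \<le> norm (z + of_real s)" using complex_Re_le_cmod[of "z + of_real s"] by simp
      also have "\<dots> = exp (- Re z * \<tau>) * (Y * exp (- s * \<tau>))"
        unfolding 2 using assms(1) by (simp add: norm_mult norm_exp_eq_Re)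
      also have "\<dots> \<le> Y * exp (- s * \<tau>)"
        using \<open>\<not> Re z < 0\<close> assms(1,2) by (simp add: mult_le_cancel_right1 mult_nonneg_nonneg)
      finally show False using assms(3) by simp
    qed
  qed simp
qed

lemma Eplus_locally_asymp_stable_tau0:
  assumes "0 < s" "s < Y"
  shows "locally_asymp_stable s Y 0 (Eplus s Y 0)"
  unfolding locally_asymp_stable_def
proof (intro allI impI)
  fix z assume "char_fun s Y 0 (Eplus s Y 0) z = 0"
  then have root: "z * z + of_real (s / Y) * z + of_real (s * (1 - s / Y)) = 0"
    using char_fun_Eplus_tau0[of Y s z] assms by simp
  have "0 < s / Y" "0 < s * (1 - s / Y)" using assms by (simp_all add: field_simps)
  have re: "Re z * Re z - Im z * Im z + s / Y * Re z + s * (1 - s / Y) = 0"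
    using arg_cong[OF root, of Re] by simp
  have im: "Im z * (2 * Re z + s / Y) = 0"
    using arg_cong[OF root, of Im] by (simp add: algebra_simps)
  show "Re z < 0"
  proof (cases "Im z = 0")
    case True
    have "0 \<le> Re z \<Longrightarrow> 0 \<le> Re z * Re z + s / Y * Re z"
      using \<open>0 < s / Y\<close> by (intro add_nonneg_nonneg mult_nonneg_nonneg) auto
    then have "0 \<le> Re z \<Longrightarrow> 0 < Re z * Re z + s / Y * Re z + s * (1 - s / Y)"
      using \<open>0 < s * (1 - s / Y)\<close> by linarith
    then show ?thesis using re True by force
  next
    case False
    then show ?thesis using im \<open>0 < s / Y\<close> by simp
  qed
qed

lemma less_tau_c_iff:
  assumes "0 < s" "0 < Y"
  shows "\<tau> < tau_c s Y \<longleftrightarrow> s * exp (s * \<tau>) < Y"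
proof -
  have "\<tau> < tau_c s Y \<longleftrightarrow> s * \<tau> < ln (Y / s)" unfolding tau_c_def using assms by (simp add: field_simps)
  also have "\<dots> \<longleftrightarrow> exp (s * \<tau>) < Y / s" using assms by (metis exp_less_cancel_iff exp_ln divide_pos_pos)
  also have "\<dots> \<longleftrightarrow> s * exp (s * \<tau>) < Y" using assms by (simp add: field_simps)
  finally show ?thesis .
qed

lemma greater_tau_c_iff:
  assumes "0 < s" "0 < Y"
  shows "tau_c s Y < \<tau> \<longleftrightarrow> Y * exp (- s * \<tau>) < s"
proof -
  have "tau_c s Y < \<tau> \<longleftrightarrow> ln (Y / s) < s * \<tau>" unfolding tau_c_def using assms by (simp add: field_simps)
  also have "\<dots> \<longleftrightarrow> Y / s < exp (s * \<tau>)" using assms by (metis exp_less_cancel_iff exp_ln divide_pos_pos)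
  also have "\<dots> \<longleftrightarrow> Y * exp (- s * \<tau>) < s" using assms by (simp add: exp_minus field_simps)
  finally show ?thesis .
qed

lemma Eplus_pos_iff:
  assumes "0 < s" "0 < Y"
  shows "0 < fst (Eplus s Y \<tau>) \<and> 0 < snd (Eplus s Y \<tau>) \<longleftrightarrow> s * exp (s * \<tau>) < Y"
  unfolding Eplus_def using assms by (simp add: field_simps)

lemma delay_solution_of_is_solution:
  assumes "0 < s" "0 < Y" "0 \<le> \<tau>" "is_solution s Y \<tau> \<phi> \<psi> x y"
    and "\<forall>\<theta>\<in>{-\<tau>..0}. 0 \<le> \<phi> \<theta> \<and> 0 \<le> \<psi> \<theta>" "0 < \<phi> 0"
  shows "delay_solution s (Y * exp (- s * \<tau>)) \<tau> x y"
proof unfold_locales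
  show "0 < Y * exp (- s * \<tau>)" using assms(2) by simp
  fix t :: real assume "0 \<le> t"
  then show "(x has_real_derivative x t * (1 - x t - y t)) (at t within {0..})"
    "(y has_real_derivative Y * exp (- s * \<tau>) * x (t - \<tau>) * y (t - \<tau>) - s * y t) (at t within {0..})"
    using assms(4) unfolding is_solution_def rhs_x_def rhs_y_def by (simp_all add: algebra_simps)
qed (use assms in \<open>auto simp: is_solution_def\<close>)

lemma E1_globally_asymp_stable:
  assumes "0 < s" "0 < Y" "0 \<le> \<tau>" "tau_c s Y < \<tau>"
  shows "globally_asymp_stable s Y \<tau> E1 (in_X0 \<tau>)"
  unfolding globally_asymp_stable_def
proof (intro conjI allI impI)
  have gain: "Y * exp (- s * \<tau>) < s" using greater_tau_c_iff assms by blast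
  then show "locally_asymp_stable s Y \<tau> E1" using E1_locally_asymp_stable assms(2,3) by blast
  fix \<phi> \<psi> x y assume X0: "in_X0 \<tau> \<phi> \<psi>" and sol: "is_solution s Y \<tau> \<phi> \<psi> x y"
  interpret delay_solution s "Y * exp (- s * \<tau>)" \<tau> x y
    using X0 assms by (intro delay_solution_of_is_solution[OF _ _ _ sol]) (auto simp: in_X0_def in_X_def)
  show "(x \<longlongrightarrow> fst E1) at_top" "(y \<longlongrightarrow> snd E1) at_top"
    using tendsto_x_1[OF tendsto_y_0[OF gain]] tendsto_y_0[OF gain] by (simp_all add: E1_def)
qed

lemma Eplus_globally_asymp_stable_tau0:
  assumes "0 < s" "s < Y"
  shows "globally_asymp_stable s Y 0 (Eplus s Y 0) in_int_R2plus"
  unfolding globally_asymp_stable_def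
proof (intro conjI allI impI)
  show "locally_asymp_stable s Y 0 (Eplus s Y 0)" by (rule Eplus_locally_asymp_stable_tau0[OF assms])
  fix \<phi> \<psi> x y assume init: "in_int_R2plus \<phi> \<psi>" and sol: "is_solution s Y 0 \<phi> \<psi> x y"
  have "delay_solution s (Y * exp (- s * 0)) 0 x y"
    using init assms by (intro delay_solution_of_is_solution[OF _ _ _ sol]) (auto simp: in_int_R2plus_def)
  then interpret delay_solution s Y 0 x y by simp
  have "0 < y 0" using init sol unfolding in_int_R2plus_def is_solution_def by auto
  then show "(x \<longlongrightarrow> fst (Eplus s Y 0)) at_top" "(y \<longlongrightarrow> snd (Eplus s Y 0)) at_top"
    using tendsto_x_Eplus_tau0 tendsto_y_Eplus_tau0 assms(2) by (simp_all add: Eplus_def)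
qed

lemma uniformly_persistent:
  assumes "0 < s" "0 < Y" "0 \<le> \<tau>" "s * exp (s * \<tau>) < Y"
  shows "\<exists>\<epsilon>>0. \<forall>\<phi> \<psi> x y. in_X0 \<tau> \<phi> \<psi> \<longrightarrow> is_solution s Y \<tau> \<phi> \<psi> x y \<longrightarrow>
    ereal \<epsilon> < Liminf at_top (\<lambda>t. ereal (x t)) \<and> ereal \<epsilon> < Liminf at_top (\<lambda>t. ereal (y t))"
proof -
  define c where "c = Y * exp (- s * \<tau>)"
  interpret delay_system s c \<tau> using assms unfolding c_def by unfold_locales auto
  have "s < c" unfolding c_def using assms(4) by (simp add: exp_minus field_simps)
  define \<epsilon> where "\<epsilon> = min x_floor y_floor / 2"
  have "0 < \<epsilon>" "\<epsilon> < x_floor" "\<epsilon> < y_floor"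
    using x_floor_pos y_floor_pos[OF \<open>s < c\<close>] unfolding \<epsilon>_def by auto
  have "ereal \<epsilon> < Liminf at_top (\<lambda>t. ereal (x t)) \<and> ereal \<epsilon> < Liminf at_top (\<lambda>t. ereal (y t))"
    if X0: "in_X0 \<tau> \<phi> \<psi>" and sol: "is_solution s Y \<tau> \<phi> \<psi> x y" for \<phi> \<psi> x y
  proof -
    interpret delay_solution s c \<tau> x y
      unfolding c_def using X0 assms by (intro delay_solution_of_is_solution[OF _ _ _ sol])
        (auto simp: in_X0_def in_X_def)
    obtain \<theta> where "\<theta> \<in> {-\<tau>..0}" "0 < \<phi> \<theta> * \<psi> \<theta>" using X0 unfolding in_X0_def by auto
    then have "\<forall>\<^sub>F t in at_top. 0 < y t"
      using sol eventually_y_pos unfolding is_solution_def by auto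
    then have "\<forall>\<^sub>F t in at_top. ereal y_floor \<le> ereal (y t)"
      using y_persistent[OF \<open>s < c\<close>] by simp
    moreover have "\<forall>\<^sub>F t in at_top. ereal x_floor \<le> ereal (x t)"
      using x_persistent[OF \<open>s < c\<close>] by simp
    ultimately have "ereal y_floor \<le> Liminf at_top (\<lambda>t. ereal (y t))"
      "ereal x_floor \<le> Liminf at_top (\<lambda>t. ereal (x t))"
      by (simp_all add: Liminf_bounded)
    moreover have "ereal \<epsilon> < ereal x_floor" "ereal \<epsilon> < ereal y_floor"
      using \<open>\<epsilon> < x_floor\<close> \<open>\<epsilon> < y_floor\<close> by simp_all
    ultimately show ?thesis by (meson less_le_trans)
  qed
  then show ?thesis using \<open>0 < \<epsilon>\<close> by blast
qed

theorem theorem3p1: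
  fixes s Y \<tau> :: real
  assumes "s > 0" and "Y > 0" and "\<tau> \<ge> 0"
  shows
    "unstable s Y \<tau> E0 \<and>
     (\<tau> < tau_c s Y \<longrightarrow> unstable s Y \<tau> E1) \<and>
     (\<tau> > tau_c s Y \<longrightarrow> globally_asymp_stable s Y \<tau> E1 (in_X0 \<tau>)) \<and>
     ((fst (Eplus s Y \<tau>) > 0 \<and> snd (Eplus s Y \<tau>) > 0) \<longleftrightarrow> \<tau> < tau_c s Y) \<and>
     (fst (Eplus s Y \<tau>) > 0 \<and> snd (Eplus s Y \<tau>) > 0 \<and> \<tau> = 0 \<longrightarrow>
        globally_asymp_stable s Y \<tau> (Eplus s Y \<tau>) in_int_R2plus) \<and>
     (fst (Eplus s Y \<tau>) > 0 \<and> snd (Eplus s Y \<tau>) > 0 \<longrightarrow>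
        (\<exists>\<epsilon>>0. \<forall>\<phi> \<psi> x y. in_X0 \<tau> \<phi> \<psi> \<longrightarrow> is_solution s Y \<tau> \<phi> \<psi> x y \<longrightarrow>
            Liminf at_top (\<lambda>t. ereal (x t)) > ereal \<epsilon> \<and>
            Liminf at_top (\<lambda>t. ereal (y t)) > ereal \<epsilon>))"
proof -
  note Eplus_pos = Eplus_pos_iff[OF assms(1,2)] and tau_c = less_tau_c_iff[OF assms(1,2)]
  have "\<tau> < tau_c s Y \<longrightarrow> unstable s Y \<tau> E1" using E1_unstable assms tau_c by blast
  moreover have "\<tau> > tau_c s Y \<longrightarrow> globally_asymp_stable s Y \<tau> E1 (in_X0 \<tau>)"
    using E1_globally_asymp_stable assms by blast
  moreover have "fst (Eplus s Y \<tau>) > 0 \<and> snd (Eplus s Y \<tau>) > 0 \<and> \<tau> = 0 \<longrightarrow>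
      globally_asymp_stable s Y \<tau> (Eplus s Y \<tau>) in_int_R2plus"
  proof
    assume "fst (Eplus s Y \<tau>) > 0 \<and> snd (Eplus s Y \<tau>) > 0 \<and> \<tau> = 0"
    then have "\<tau> = 0" "s < Y" using Eplus_pos[of \<tau>] by auto
    then show "globally_asymp_stable s Y \<tau> (Eplus s Y \<tau>) in_int_R2plus"
      using Eplus_globally_asymp_stable_tau0 assms(1) by simp
  qed
  moreover have "fst (Eplus s Y \<tau>) > 0 \<and> snd (Eplus s Y \<tau>) > 0 \<longrightarrow>
      (\<exists>\<epsilon>>0. \<forall>\<phi> \<psi> x y. in_X0 \<tau> \<phi> \<psi> \<longrightarrow> is_solution s Y \<tau> \<phi> \<psi> x y \<longrightarrow>
        Liminf at_top (\<lambda>t. ereal (x t)) > ereal \<epsilon> \<and> Liminf at_top (\<lambda>t. ereal (y t)) > ereal \<epsilon>)"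
    using uniformly_persistent assms Eplus_pos by blast
  ultimately show ?thesis using E0_unstable Eplus_pos tau_c by blast
qed

end
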